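(* Let $x_a,x_b\in\mathbb{R}$ and $U=\{x\in C^1[a,b]: x(a)=x_a,\ x(b)=x_b\}$. Let $x$ be a local minimizer of $J(x)=\int_a^b L(t,x(t),{}^CD_{a+}^{\alpha,\rho}x(t))\,dt$ on $U$. If the second partial derivatives $\partial^2_{ij}L$ exist and are continuous for $i,j\in\{2,3\}$, then $$\partial^2_{33}L(t,x(t),{}^CD_{a+}^{\alpha,\rho}x(t))\ge 0\quad\text{for all } t\in[a,b].$$
   Context: Fix $0<a<b<\infty$, $\alpha\in(0,1)$, $\rho>0$. For $x\in C^1[a,b]$, ${}^CD_{a+}^{\alpha,\rho} x(t)=\frac{\rho^\alpha}{\Gamma(1-\alpha)}\, t^{1-\rho}\frac{d}{dt}\int_a^t \frac{\tau^{\rho-1}}{(t^\rho-\tau^\rho)^\alpha}[x(\tau)-x(a)]\,d\tau=\frac{\rho^\alpha}{\Gamma(1-\alpha)}\int_a^t (t^\rho-\tau^\rho)^{-\alpha}x'(\tau)\,d\tau$. For a function $f$, $D_{b-}^{\alpha,\rho} f(t)=\frac{\rho^\alpha}{\Gamma(1-\alpha)}\frac{d}{dt}\int_t^b (\tau^\rho-t^\rho)^{-\alpha}f(\tau)\,d\tau$. $\partial_i$ and $\partial^2_{ij}$ denote first and second partial derivatives with respect to the indicated arguments. $L:[a,b]\times\mathbb{R}^2\to\mathbb{R}$ is continuously differentiable with respect to its second and third arguments, and for every $x\in C^1[a,b]$ the map $t\mapsto D_{b-}^{\alpha,\rho}(\partial_3L(t,x(t),{}^CD_{a+}^{\alpha,\rho}x(t)))$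 is continuous. $C^1[a,b]$ carries the norm $\|x\|=\max|x|+\max|{}^CD_{a+}^{\alpha,\rho}x|$, and local minimizers are taken with respect to this norm. *)

theory Defs
  imports "HOL-Analysis.Analysis"
begin

definition C1_on :: "real \<Rightarrow> real \<Rightarrow> (real \<Rightarrow> real) \<Rightarrow> bool" where
  "C1_on a b x \<longleftrightarrow>
     (\<exists>x'. continuous_on {a..b} x' \<and>
           (\<forall>t\<in>{a..b}. (x has_real_derivative x' t) (at t within {a..b})))"

definition caputo_left :: "real \<Rightarrow> real \<Rightarrow> real \<Rightarrow> real \<Rightarrow> (real \<Rightarrow> real) \<Rightarrow> real \<Rightarrow> real" where
  "caputo_left a b \<alpha> \<rho> x t =
     \<rho> powr \<alpha> / Gamma (1 - \<alpha>) *
       integral {a..t} (\<lambda>\<tau>. (t powr \<rho> - \<tau> powr \<rho>) powr (- \<alpha>) * vector_derivative x (at \<tau> within {a..b}))"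

definition RL_right_primitive :: "real \<Rightarrow> real \<Rightarrow> real \<Rightarrow> (real \<Rightarrow> real) \<Rightarrow> real \<Rightarrow> real" where
  "RL_right_primitive b \<alpha> \<rho> f s =
     \<rho> powr \<alpha> / Gamma (1 - \<alpha>) * integral {s..b} (\<lambda>\<tau>. (\<tau> powr \<rho> - s powr \<rho>) powr (- \<alpha>) * f \<tau>)"

definition RL_right :: "real \<Rightarrow> real \<Rightarrow> real \<Rightarrow> real \<Rightarrow> (real \<Rightarrow> real) \<Rightarrow> real \<Rightarrow> real" where
  "RL_right a b \<alpha> \<rho> f t = vector_derivative (RL_right_primitive b \<alpha> \<rho> f) (at t within {a..b})"

definition RL_right_continuous :: "real \<Rightarrow> real \<Rightarrow> real \<Rightarrow> real \<Rightarrow> (real \<Rightarrow> real) \<Rightarrow> bool" where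
  "RL_right_continuous a b \<alpha> \<rho> f \<longleftrightarrow>
     (\<forall>t\<in>{a..b}. RL_right_primitive b \<alpha> \<rho> f differentiable (at t within {a..b})) \<and>
     continuous_on {a..b} (RL_right a b \<alpha> \<rho> f)"

definition J_fun :: "real \<Rightarrow> real \<Rightarrow> real \<Rightarrow> real \<Rightarrow> (real \<Rightarrow> real \<Rightarrow> real \<Rightarrow> real) \<Rightarrow> (real \<Rightarrow> real) \<Rightarrow> real" where
  "J_fun a b \<alpha> \<rho> L x = integral {a..b} (\<lambda>t. L t (x t) (caputo_left a b \<alpha> \<rho> x t))"

definition frac_norm :: "real \<Rightarrow> real \<Rightarrow> real \<Rightarrow> real \<Rightarrow> (real \<Rightarrow> real) \<Rightarrow> real" where
  "frac_norm a b \<alpha> \<rho> x = (SUP t\<in>{a..b}. \<bar>x t\<bar>) + (SUP t\<in>{a..b}. \<bar>caputo_left a b \<alpha> \<rho> x t\<bar>)"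

definition U_set :: "real \<Rightarrow> real \<Rightarrow> real \<Rightarrow> real \<Rightarrow> (real \<Rightarrow> real) set" where
  "U_set a b xa xb = {x. C1_on a b x \<and> x a = xa \<and> x b = xb}"

definition local_minimizer :: "real \<Rightarrow> real \<Rightarrow> real \<Rightarrow> real \<Rightarrow> (real \<Rightarrow> real \<Rightarrow> real \<Rightarrow> real)
     \<Rightarrow> (real \<Rightarrow> real) set \<Rightarrow> (real \<Rightarrow> real) \<Rightarrow> bool" where
  "local_minimizer a b \<alpha> \<rho> L U x \<longleftrightarrow> x \<in> U \<and>
     (\<exists>\<epsilon>>0. \<forall>y\<in>U. frac_norm a b \<alpha> \<rho> (\<lambda>t. y t - x t) < \<epsilon> \<longrightarrow> J_fun a b \<alpha> \<rho> L x \<le> J_fun a b \<alpha> \<rho> L y)"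

end

theory Submission
  imports Defs
begin

text \<open>
  A local minimizer \<open>x\<close> has nonnegative second variation
  \<open>\<integral> L22 h\<^sup>2 + (L23 + L32) h D h + L33 (D h)\<^sup>2\<close> along every \<open>C\<^sup>1\<close> variation \<open>h\<close> vanishing
  at \<open>a\<close> and \<open>b\<close>, where \<open>D\<close> is the Caputo--Katugampola derivative: this follows from a
  second-order Taylor estimate of \<open>J(x + s h) + J(x - s h) - 2 J(x)\<close> that is uniform on
  compact sets.

  Suppose \<open>L33 \<le> -\<kappa> < 0\<close> along \<open>x\<close> on some \<open>[c, c + \<delta>]\<close> and test with the bump
  \<open>h = (max 0 ((t - c)(c + e - t)))\<^sup>2\<close> of height \<open>e\<^sup>4/16\<close>. On \<open>[a,b]\<close> the kernel
  \<open>(t\<^sup>\<rho> - \<tau>\<^sup>\<rho>)\<^bsup>-\<alpha>\<^esup>\<close> is comparable to \<open>(t - \<tau>)\<^bsup>-\<alpha>\<^esup>\<close>, so \<open>D h = O(e\<^bsup>4-\<alpha>\<^esup>)\<close> on the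
  support and \<open>D h \<ge> const \<cdot> e\<^bsup>4-\<alpha>\<^esup>\<close> on \<open>[c + e/4, c + e/2]\<close>. Beyond \<open>c + \<delta>\<close> the
  kernel is Lipschitz in \<open>\<tau>\<close> over the support and \<open>\<integral> h' = 0\<close>, so there \<open>D h = O(e\<^sup>5)\<close>.
  Hence the second variation is at most \<open>O(e\<^sup>9) + O(e\<^bsup>9-\<alpha>\<^esup>) + O(e\<^sup>1\<^sup>0) - const \<cdot> \<kappa> e\<^bsup>9-2\<alpha>\<^esup>\<close>,
  which is negative for small \<open>e\<close>.
\<close>

lemma continuous_on_abs_bound:
  fixes f :: "real \<Rightarrow> real"
  assumes "continuous_on {a..b} f"
  obtains B where "B \<ge> 0" "\<And>\<tau>. \<tau> \<in> {a..b} \<Longrightarrow> \<bar>f \<tau>\<bar> \<le> B"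
proof -
  have "bounded (f ` {a..b})"
    using assms compact_continuous_image compact_imp_bounded by blast
  then obtain B where "B > 0" "\<forall>y\<in>f ` {a..b}. norm y \<le> B"
    unfolding bounded_pos by blast
  then show ?thesis using that[of B] by auto
qed

lemma powr_between_endpoints:
  fixes a b z p :: real
  assumes "0 < a" "a \<le> z" "z \<le> b"
  shows "min (a powr p) (b powr p) \<le> z powr p" and "z powr p \<le> max (a powr p) (b powr p)"
proof -
  have "a powr p \<le> z powr p \<and> z powr p \<le> b powr p \<or> b powr p \<le> z powr p \<and> z powr p \<le> a powr p"
  proof (cases "p \<ge> 0")
    case True
    then show ?thesis using assms by (auto intro!: powr_mono2)
  next
    case False
    then show ?thesis using assms by (auto intro!: powr_mono2')
  qed
  then show "min (a powr p) (b powr p) \<le> z powr p" "z powr p \<le> max (a powr p) (b powr p)"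
    by linarith+
qed

lemma powr_neg_diff_le:
  fixes \<alpha> u v :: real
  assumes "0 \<le> \<alpha>" "0 < u" "u \<le> v"
  shows "u powr (-\<alpha>) - v powr (-\<alpha>) \<le> \<alpha> * u powr (-\<alpha> - 1) * (v - u)"
proof (cases "u = v")
  case False
  then have uv: "u < v" using assms by simp
  have "\<exists>z. u < z \<and> z < v \<and> v powr (-\<alpha>) - u powr (-\<alpha>) = (v - u) * (-\<alpha> * z powr (-\<alpha> - 1))"
  proof (rule MVT2[OF uv])
    fix x assume "u \<le> x" "x \<le> v"
    then show "((\<lambda>z. z powr (-\<alpha>)) has_real_derivative (-\<alpha> * x powr (-\<alpha> - 1))) (at x)"
      using has_real_derivative_powr[of x "-\<alpha>"] assms by simp
  qed
  then obtain z where z: "u < z" "v powr (-\<alpha>) - u powr (-\<alpha>) = (v - u) * (-\<alpha> * z powr (-\<alpha> - 1))"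
    by blast
  have "z powr (-\<alpha> - 1) \<le> u powr (-\<alpha> - 1)" using z assms by (intro powr_mono2') auto
  then have "(v - u) * (\<alpha> * z powr (-\<alpha> - 1)) \<le> (v - u) * (\<alpha> * u powr (-\<alpha> - 1))"
    using uv assms by (intro mult_left_mono) auto
  then show ?thesis using z(2) by (simp add: algebra_simps)
qed simp

lemma has_integral_singular_powr:
  fixes \<alpha> u t :: real
  assumes "\<alpha> < 1" "u \<le> t"
  shows "((\<lambda>\<tau>. (t - \<tau>) powr (-\<alpha>)) has_integral (t - u) powr (1 - \<alpha>) / (1 - \<alpha>)) {u..t}"
proof -
  have "((\<lambda>x. x powr (-\<alpha>)) has_integral ((t-u) powr (-\<alpha>+1) / (-\<alpha>+1))) {0..t-u}"
    using assms by (intro has_integral_powr_from_0) auto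
  from has_integral_affinity[OF this[unfolded interval_cbox], of "-1" t]
  show ?thesis by (simp add: algebra_simps)
qed

lemma has_integral_rescale_unit_interval:
  fixes F :: "real \<Rightarrow> real"
  assumes "a \<le> t" "(F has_integral i) {a..t}"
  shows "((\<lambda>\<theta>. (t - a) * F (a + (t - a) * \<theta>)) has_integral i) {0..1}"
proof (cases "t = a")
  case True
  then have "i = 0"
    using assms by (metis atLeastAtMost_singleton has_integral_refl(2) has_integral_unique)
  then show ?thesis using True by simp
next
  case False
  then have ta: "t - a > 0" using assms by simp
  have "t / (t - a) - a / (t - a) = 1"
    using ta by (simp add: diff_divide_distrib[symmetric])
  then have image: "(\<lambda>x. (1 / (t - a)) * x + - (1 / (t - a) * a)) ` cbox a t = {0..1}"
    using image_affinity_atLeastAtMost[of "1 / (t - a)" "- (1 / (t - a) * a)" a t] ta by simp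
  from has_integral_affinity[OF assms(2)[unfolded interval_cbox], of "t - a" a]
  have "((\<lambda>x. F ((t - a) * x + a)) has_integral (1 / (t - a)) * i)
          ((\<lambda>x. (1 / (t - a)) * x + - (1 / (t - a) * a)) ` cbox a t)"
    using ta by simp
  then have "((\<lambda>x. F ((t - a) * x + a)) has_integral (1 / (t - a)) * i) {0..1}"
    by (simp only: image)
  from has_integral_mult_right[OF this, of "t - a"] show ?thesis
    using ta by (simp add: add.commute)
qed

lemma has_integral_indicator_const:
  fixes v :: real
  assumes "l \<le> p" "p \<le> q" "q \<le> u"
  shows "((\<lambda>t. indicator {p..q} t * v) has_integral v * (q - p)) {l..u}"
proof -
  have "((\<lambda>t. v) has_integral v * (q - p)) {p..q}"
    using has_integral_const_real[of v p q] assms by (simp add: mult.commute)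
  moreover have "{p..q} \<subseteq> {l..u}" using assms by auto
  ultimately have "((\<lambda>t. if t \<in> {p..q} then v else 0) has_integral v * (q - p)) {l..u}"
    by (simp only: has_integral_restrict)
  moreover have "(\<lambda>t. indicator {p..q} t * v) = (\<lambda>t. if t \<in> {p..q} then v else 0)"
    by (auto simp: indicator_def)
  ultimately show ?thesis by simp
qed

lemma continuous_on_compose3:
  fixes G :: "real \<Rightarrow> real \<Rightarrow> real \<Rightarrow> real"
  assumes "continuous_on ({a..b} \<times> UNIV \<times> UNIV) (\<lambda>(t, u, v). G t u v)"
    and "continuous_on {a..b} f" "continuous_on {a..b} g"
  shows "continuous_on {a..b} (\<lambda>t. G t (f t) (g t))"
  using continuous_on_compose2[OF assms(1) continuous_on_Pair[OF continuous_on_id continuous_on_Pair[OF assms(2,3)]]]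
  by auto

lemma continuous_on_slice:
  fixes G :: "real \<Rightarrow> real \<Rightarrow> real \<Rightarrow> real"
  assumes "continuous_on ({a..b} \<times> UNIV \<times> UNIV) (\<lambda>(t, u, v). G t u v)" and "t \<in> {a..b}"
  shows "continuous_on UNIV (\<lambda>(u, v). G t u v)"
proof -
  have "continuous_on UNIV (\<lambda>z::real \<times> real. (t, fst z, snd z))"
    by (intro continuous_intros)
  moreover have "range (\<lambda>z::real \<times> real. (t, fst z, snd z)) \<subseteq> {a..b} \<times> UNIV \<times> UNIV"
    using assms(2) by auto
  ultimately show ?thesis
    using continuous_on_compose2[OF assms(1)] by (fastforce simp: split_beta)
qed

lemma uniformly_continuous_on_slab:
  fixes G :: "real \<Rightarrow> real \<Rightarrow> real \<Rightarrow> real"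
  assumes G: "continuous_on ({a..b} \<times> UNIV \<times> UNIV) (\<lambda>(t, u, v). G t u v)" and e: "e > 0"
  obtains d where "d > 0"
    "\<And>t u v u' v'. t \<in> {a..b} \<Longrightarrow> \<bar>u\<bar> \<le> R \<Longrightarrow> \<bar>v\<bar> \<le> R \<Longrightarrow> \<bar>u'\<bar> \<le> R \<Longrightarrow> \<bar>v'\<bar> \<le> R
       \<Longrightarrow> \<bar>u' - u\<bar> < d \<Longrightarrow> \<bar>v' - v\<bar> < d \<Longrightarrow> \<bar>G t u' v' - G t u v\<bar> < e"
proof -
  define C where "C = {a..b} \<times> {-R..R} \<times> {-R..R}"
  have "continuous_on C (\<lambda>(t, u, v). G t u v)"
    using G by (rule continuous_on_subset) (auto simp: C_def)
  then have "uniformly_continuous_on C (\<lambda>(t, u, v). G t u v)"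
    unfolding C_def by (intro compact_uniformly_continuous compact_Times compact_Icc)
  then obtain d0 where d0: "d0 > 0" and uc: "\<And>z z'. z \<in> C \<Longrightarrow> z' \<in> C \<Longrightarrow> dist z' z < d0
      \<Longrightarrow> dist ((\<lambda>(t, u, v). G t u v) z') ((\<lambda>(t, u, v). G t u v) z) < e"
    unfolding uniformly_continuous_on_def using e by metis
  show ?thesis
  proof (rule that[of "d0 / sqrt 2"])
    show "d0 / sqrt 2 > 0" using d0 by simp
    fix t u v u' v' assume "t \<in> {a..b}" "\<bar>u\<bar> \<le> R" "\<bar>v\<bar> \<le> R" "\<bar>u'\<bar> \<le> R" "\<bar>v'\<bar> \<le> R"
      and close: "\<bar>u' - u\<bar> < d0 / sqrt 2" "\<bar>v' - v\<bar> < d0 / sqrt 2"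
    then have "(t, u, v) \<in> C" "(t, u', v') \<in> C" by (auto simp: C_def abs_le_iff)
    moreover have "dist (t, u', v') (t, u, v) < d0"
      using real_sqrt_sum_squares_less[OF close] by (simp add: dist_Pair_Pair dist_real_def)
    ultimately show "\<bar>G t u' v' - G t u v\<bar> < e" using uc by (fastforce simp: dist_real_def)
  qed
qed

lemma quadratic_form_abs_le:
  fixes A B C D p q e W :: real
  assumes "\<bar>A\<bar> \<le> e" "\<bar>B\<bar> \<le> e" "\<bar>C\<bar> \<le> e" "\<bar>D\<bar> \<le> e" "\<bar>p\<bar> \<le> W" "\<bar>q\<bar> \<le> W"
  shows "\<bar>(A * p + B * q) * p + (C * p + D * q) * q\<bar> \<le> 4 * e * W\<^sup>2"
proof -
  have triple: "\<bar>X * y * z\<bar> \<le> e * W * W" if "\<bar>X\<bar> \<le> e" "\<bar>y\<bar> \<le> W" "\<bar>z\<bar> \<le> W" for X y z :: real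
    unfolding abs_mult using that assms(5) by (intro mult_mono) auto
  have "\<bar>(A * p + B * q) * p + (C * p + D * q) * q\<bar>
          \<le> \<bar>A * p * p\<bar> + \<bar>B * q * p\<bar> + \<bar>C * p * q\<bar> + \<bar>D * q * q\<bar>"
    by (simp add: algebra_simps)
  also have "\<dots> \<le> e * W * W + e * W * W + e * W * W + e * W * W"
    using triple assms by (intro add_mono) auto
  finally show ?thesis by (simp add: power2_eq_square algebra_simps)
qed

lemma has_real_derivative_along_line:
  fixes F Fu Fv :: "real \<Rightarrow> real \<Rightarrow> real"
  assumes du: "\<And>u v. ((\<lambda>u. F u v) has_real_derivative Fu u v) (at u)"
    and dv: "\<And>u v. ((\<lambda>v. F u v) has_real_derivative Fv u v) (at v)"
    and cu: "continuous_on UNIV (\<lambda>(u, v). Fu u v)"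
  shows "((\<lambda>r. F (u0 + r * p) (v0 + r * q)) has_real_derivative
            Fu (u0 + r * p) (v0 + r * q) * p + Fv (u0 + r * p) (v0 + r * q) * q) (at r)"
proof -
  let ?u = "u0 + r * p" and ?v = "v0 + r * q"
  have "continuous_on UNIV (\<lambda>(x::real, y::real). Fu y x)"
    using continuous_on_compose2[OF cu, of UNIV "\<lambda>z. (snd z, fst z)"]
    by (simp add: split_beta continuous_on_snd continuous_on_fst continuous_on_Pair)
  then have "continuous_on UNIV (\<lambda>(x::real, y::real). blinfun_mult_right (Fu y x))"
    using bounded_linear.continuous_on[OF bounded_linear_blinfun_mult_right, of UNIV "\<lambda>(x, y). Fu y x"]
    by (simp add: split_beta)
  then have "continuous (at (?v, ?u) within UNIV \<times> UNIV) (\<lambda>(x, y). blinfun_mult_right (Fu y x))"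
    by (simp add: continuous_on_eq_continuous_at)
  then have "((\<lambda>(x, y). F y x) has_derivative (\<lambda>(tx, ty). Fv ?u ?v * tx + blinfun_mult_right (Fu ?u ?v) ty))
               (at (?v, ?u) within UNIV \<times> UNIV)"
    using dv[of ?u ?v] du by (intro has_derivative_partialsI) (auto simp: has_field_derivative_def)
  then have "((\<lambda>(x, y). F y x) has_derivative (\<lambda>(tx, ty). Fv ?u ?v * tx + Fu ?u ?v * ty)) (at (?v, ?u))"
    by simp
  moreover have "((\<lambda>r. (v0 + r * q, u0 + r * p)) has_derivative (\<lambda>h. (h * q, h * p))) (at r)"
    by (auto intro!: derivative_eq_intros simp: algebra_simps)
  ultimately have "((\<lambda>r. F (u0 + r * p) (v0 + r * q)) has_derivative
                     (\<lambda>h. Fv ?u ?v * (h * q) + Fu ?u ?v * (h * p))) (at r)"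
    using has_derivative_compose by (fastforce simp: o_def)
  then show ?thesis unfolding has_field_derivative_def
    by (rule has_derivative_eq_rhs) (auto simp: algebra_simps)
qed

lemma symmetric_second_difference_le:
  fixes F Fu Fv Fuu Fuv Fvu Fvv :: "real \<Rightarrow> real \<Rightarrow> real"
  assumes du: "\<And>u v. ((\<lambda>u. F u v) has_real_derivative Fu u v) (at u)"
    and dv: "\<And>u v. ((\<lambda>v. F u v) has_real_derivative Fv u v) (at v)"
    and duu: "\<And>u v. ((\<lambda>u. Fu u v) has_real_derivative Fuu u v) (at u)"
    and duv: "\<And>u v. ((\<lambda>v. Fu u v) has_real_derivative Fuv u v) (at v)"
    and dvu: "\<And>u v. ((\<lambda>u. Fv u v) has_real_derivative Fvu u v) (at u)"
    and dvv: "\<And>u v. ((\<lambda>v. Fv u v) has_real_derivative Fvv u v) (at v)"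
    and cu: "continuous_on UNIV (\<lambda>(u, v). Fu u v)"
    and cuu: "continuous_on UNIV (\<lambda>(u, v). Fuu u v)"
    and cvu: "continuous_on UNIV (\<lambda>(u, v). Fvu u v)"
    and s: "s > 0"
    and bound: "\<And>r. r \<in> {-s..s} \<Longrightarrow>
        (Fuu (u0 + r * p) (v0 + r * q) * p + Fuv (u0 + r * p) (v0 + r * q) * q) * p
      + (Fvu (u0 + r * p) (v0 + r * q) * p + Fvv (u0 + r * p) (v0 + r * q) * q) * q \<le> B"
  shows "F (u0 + s * p) (v0 + s * q) + F (u0 - s * p) (v0 - s * q) - 2 * F u0 v0 \<le> s\<^sup>2 * B"
proof -
  define \<phi> where "\<phi> r = F (u0 + r * p) (v0 + r * q)" for r
  define \<phi>1 where "\<phi>1 r = Fu (u0 + r * p) (v0 + r * q) * p + Fv (u0 + r * p) (v0 + r * q) * q" for r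
  define \<phi>2 where "\<phi>2 r = (Fuu (u0 + r * p) (v0 + r * q) * p + Fuv (u0 + r * p) (v0 + r * q) * q) * p
      + (Fvu (u0 + r * p) (v0 + r * q) * p + Fvv (u0 + r * p) (v0 + r * q) * q) * q" for r
  define diff where "diff m = (if m = 0 then \<phi> else if m = 1 then \<phi>1 else \<phi>2)" for m :: nat
  have "(\<phi> has_real_derivative \<phi>1 r) (at r)" for r
    unfolding \<phi>_def \<phi>1_def by (rule has_real_derivative_along_line[OF du dv cu])
  moreover have "(\<phi>1 has_real_derivative \<phi>2 r) (at r)" for r
    unfolding \<phi>1_def \<phi>2_def
    by (intro DERIV_add DERIV_cmult_right has_real_derivative_along_line[OF duu duv cuu]
        has_real_derivative_along_line[OF dvu dvv cvu])
  ultimately have D: "\<forall>m t. m < 2 \<and> P t \<longrightarrow> DERIV (diff m) t :> diff (Suc m) t" for P :: "real \<Rightarrow> bool"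
    by (auto simp: diff_def less_2_cases_iff)
  obtain r1 where r1: "0 < r1" "r1 < s" "\<phi> s = (\<Sum>m<2. diff m 0 / fact m * s ^ m) + diff 2 r1 / fact 2 * s ^ 2"
    using Maclaurin[of s 2 diff \<phi>] D s by (auto simp: diff_def)
  obtain r2 where r2: "-s < r2" "r2 < 0" "\<phi> (-s) = (\<Sum>m<2. diff m 0 / fact m * (-s) ^ m) + diff 2 r2 / fact 2 * (-s) ^ 2"
    using Maclaurin_minus[of "-s" 2 diff \<phi>] D s by (auto simp: diff_def)
  have "\<phi> s + \<phi> (-s) - 2 * \<phi> 0 = s\<^sup>2 / 2 * (\<phi>2 r1 + \<phi>2 r2)"
    using r1(3) r2(3) by (simp add: diff_def numeral_2_eq_2 algebra_simps power2_eq_square)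
  also have "\<dots> \<le> s\<^sup>2 / 2 * (B + B)"
    using bound[of r1] bound[of r2] r1 r2 unfolding \<phi>2_def by (intro mult_left_mono add_mono) auto
  finally show ?thesis by (simp add: \<phi>_def)
qed

section \<open>A quartic bump\<close>

lemma has_real_derivative_max0_square:
  "((\<lambda>y::real. (max 0 y)\<^sup>2) has_real_derivative 2 * max 0 y) (at y)"
proof -
  consider "y > 0" | "y < 0" | "y = 0" by linarith
  then show ?thesis
  proof cases
    case 1
    have "((\<lambda>y::real. y\<^sup>2) has_real_derivative 2 * max 0 y) (at y)"
      using 1 by (auto intro!: derivative_eq_intros)
    then show ?thesis
      by (rule has_field_derivative_transform_within_open[where S="{0<..}"]) (use 1 in auto)
  next
    case 2
    have "((\<lambda>y::real. 0) has_real_derivative 2 * max 0 y) (at y)" using 2 by simp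
    then show ?thesis
      by (rule has_field_derivative_transform_within_open[where S="{..<0}"]) (use 2 in auto)
  next
    case 3
    have "((\<lambda>h. ((max 0 (0 + h))\<^sup>2 - (max 0 0)\<^sup>2) / h) \<longlongrightarrow> 0) (at (0::real))"
    proof (rule Lim_null_comparison)
      show "\<forall>\<^sub>F h in at 0. norm (((max 0 (0 + h))\<^sup>2 - (max 0 0)\<^sup>2) / h) \<le> \<bar>h::real\<bar>"
        by (intro always_eventually allI) (auto simp: power2_eq_square abs_mult max_def)
      show "((\<lambda>h::real. \<bar>h\<bar>) \<longlongrightarrow> 0) (at 0)"
        using tendsto_rabs[OF tendsto_ident_at[of "0::real" UNIV]] by simp
    qed
    then show ?thesis using 3 by (simp add: DERIV_def)
  qed
qed

definition bump :: "real \<Rightarrow> real \<Rightarrow> real \<Rightarrow> real" where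
  "bump c e t = (max 0 ((t - c) * (c + e - t)))\<^sup>2"

definition bump' :: "real \<Rightarrow> real \<Rightarrow> real \<Rightarrow> real" where
  "bump' c e t = 2 * max 0 ((t - c) * (c + e - t)) * (2 * c + e - 2 * t)"

lemma bump_has_real_derivative: "(bump c e has_real_derivative bump' c e t) (at t)"
proof -
  have "((\<lambda>t. (t - c) * (c + e - t)) has_real_derivative (2 * c + e - 2 * t)) (at t)"
    by (auto intro!: derivative_eq_intros simp: algebra_simps)
  from DERIV_chain2[OF has_real_derivative_max0_square this] show ?thesis
    unfolding bump_def bump'_def by simp
qed

lemma continuous_on_bump': "continuous_on S (bump' c e)"
  unfolding bump'_def by (intro continuous_intros)

lemma continuous_on_bump: "continuous_on S (bump c e)"
  using bump_has_real_derivative by (meson DERIV_continuous continuous_at_imp_continuous_on)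

lemma bump_outside:
  assumes "t \<le> c \<or> c + e \<le> t" "e > 0"
  shows "bump c e t = 0" "bump' c e t = 0"
proof -
  have "(t - c) * (c + e - t) \<le> 0" using assms by (auto simp: mult_le_0_iff)
  then show "bump c e t = 0" "bump' c e t = 0" by (auto simp: bump_def bump'_def max_def)
qed

lemma bump_bounds:
  assumes "e > 0"
  shows "0 \<le> bump c e t" "bump c e t \<le> e^4 / 16" "\<bar>bump' c e t\<bar> \<le> e^3 / 2"
proof -
  show "0 \<le> bump c e t" by (simp add: bump_def)
  have "0 \<le> (2 * t - 2 * c - e)\<^sup>2" by simp
  then have "(t - c) * (c + e - t) \<le> e\<^sup>2 / 4" by (simp add: power2_eq_square algebra_simps)
  moreover have "0 \<le> e\<^sup>2 / 4" by simp
  ultimately have g: "max 0 ((t - c) * (c + e - t)) \<le> e\<^sup>2 / 4" "0 \<le> max 0 ((t - c) * (c + e - t))"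
    by (auto simp: max_def)
  then have "bump c e t \<le> (e\<^sup>2 / 4)\<^sup>2" unfolding bump_def by (intro power_mono) auto
  then show "bump c e t \<le> e^4 / 16" by (simp add: power_divide power_mult[symmetric])
  show "\<bar>bump' c e t\<bar> \<le> e^3 / 2"
  proof (cases "t \<le> c \<or> c + e \<le> t")
    case True
    then show ?thesis using bump_outside[OF True assms] assms by simp
  next
    case False
    then have "\<bar>2 * c + e - 2 * t\<bar> \<le> e" by auto
    then have "\<bar>bump' c e t\<bar> \<le> 2 * (e\<^sup>2 / 4) * e"
      unfolding bump'_def abs_mult using g by (intro mult_mono) auto
    then show ?thesis by (simp add: power2_eq_square power3_eq_cube)
  qed
qed

lemma bump'_nonneg: "t \<le> c + e / 2 \<Longrightarrow> e > 0 \<Longrightarrow> bump' c e t \<ge> 0"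
  unfolding bump'_def by (intro mult_nonneg_nonneg) auto

lemma bump_ge:
  assumes "c + e / 4 \<le> t" "t \<le> c + e / 2" "e > 0"
  shows "e^4 / 64 \<le> bump c e t"
proof -
  have "(e / 4) * (e / 2) \<le> (t - c) * (c + e - t)" using assms by (intro mult_mono) auto
  then have "e\<^sup>2 / 8 \<le> max 0 ((t - c) * (c + e - t))" by (simp add: power2_eq_square)
  then have "(e\<^sup>2 / 8)\<^sup>2 \<le> bump c e t" unfolding bump_def using assms by (intro power_mono) auto
  then show ?thesis by (simp add: power_divide power_mult[symmetric])
qed

lemma has_integral_bump':
  "u \<le> v \<Longrightarrow> (bump' c e has_integral (bump c e v - bump c e u)) {u..v}"
  by (intro fundamental_theorem_of_calculus)
     (auto simp: has_real_derivative_iff_has_vector_derivative[symmetric]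
           intro: has_field_derivative_at_within bump_has_real_derivative)

text \<open>After division by \<open>e powr (9 - 2\<alpha>)\<close> the error terms tend to \<open>0\<close> while the gain
  is a positive constant.\<close>
lemma bump_error_terms_small:
  fixes \<alpha> M A B C D \<kappa> :: real
  assumes "0 < \<alpha>" "M \<ge> 0" "A \<ge> 0" "B > 0" "C \<ge> 0" "D \<ge> 0" "\<kappa> > 0"
  obtains e0 where "e0 > 0" "\<And>e. 0 < e \<Longrightarrow> e < e0 \<Longrightarrow>
      e * (M * (e^4 / 16)\<^sup>2 + M * (e^4 / 16) * (A * (e^3 * e powr (1 - \<alpha>)))) + D * (M * (C * e^5)\<^sup>2)
      < e / 4 * (\<kappa> * (B * ((e / 2) powr (-\<alpha>) * e^4))\<^sup>2)"
proof -
  define k where "k = \<kappa> * B\<^sup>2 * (2 powr \<alpha>)\<^sup>2 / 4"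
  have "k > 0" using assms by (simp add: k_def)
  define S where "S e = M * (e powr \<alpha>)\<^sup>2 / 256 + M * A * e powr \<alpha> / 16 + M * C\<^sup>2 * D * e * (e powr \<alpha>)\<^sup>2"
    for e :: real
  have "(S \<longlongrightarrow> S 0) (at_right 0)"
    unfolding S_def using assms
    by (intro tendsto_intros tendsto_powr') (auto simp: eventually_at_right_field intro: exI[of _ 1])
  moreover have "S 0 = 0" using assms by (simp add: S_def)
  ultimately have "\<forall>\<^sub>F e in at_right 0. S e < k"
    using \<open>k > 0\<close> by (auto dest: order_tendstoD(2))
  then obtain e0 where "e0 > 0" and small: "\<And>e. e > 0 \<Longrightarrow> e < e0 \<Longrightarrow> S e < k"
    unfolding eventually_at_right_field by auto
  show ?thesis
  proof (rule that[OF \<open>e0 > 0\<close>])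
    fix e :: real assume "0 < e" "e < e0"
    define w where "w = e powr \<alpha>"
    have "w > 0" using \<open>0 < e\<close> by (simp add: w_def)
    have r1: "e powr (1 - \<alpha>) = e / w" and r2: "(e / 2) powr (-\<alpha>) = 2 powr \<alpha> / w"
      using \<open>0 < e\<close> by (simp_all add: w_def powr_diff powr_minus_divide powr_divide)
    have "e * (M * (e^4 / 16)\<^sup>2 + M * (e^4 / 16) * (A * (e^3 * e powr (1 - \<alpha>)))) + D * (M * (C * e^5)\<^sup>2)
        - e / 4 * (\<kappa> * (B * ((e / 2) powr (-\<alpha>) * e^4))\<^sup>2) = e^9 / w\<^sup>2 * (S e - k)"
      unfolding r1 r2 S_def k_def w_def[symmetric] using \<open>w > 0\<close> \<open>0 < e\<close>
      by (simp add: field_simps power2_eq_square eval_nat_numeral)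
    moreover have "e^9 / w\<^sup>2 * (S e - k) < 0"
      using small[OF \<open>0 < e\<close> \<open>e < e0\<close>] \<open>0 < e\<close> \<open>w > 0\<close> by (intro mult_pos_neg) auto
    ultimately show "e * (M * (e^4 / 16)\<^sup>2 + M * (e^4 / 16) * (A * (e^3 * e powr (1 - \<alpha>)))) + D * (M * (C * e^5)\<^sup>2)
        < e / 4 * (\<kappa> * (B * ((e / 2) powr (-\<alpha>) * e^4))\<^sup>2)"
      by linarith
  qed
qed

section \<open>The Katugampola kernel and the Caputo derivative\<close>

locale katugampola_interval =
  fixes a b \<alpha> \<rho> :: real
  assumes params: "0 < a" "a < b" "0 < \<alpha>" "\<alpha> < 1" "0 < \<rho>"
begin

definition kernel :: "real \<Rightarrow> real \<Rightarrow> real" where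
  "kernel t \<tau> = (t powr \<rho> - \<tau> powr \<rho>) powr (- \<alpha>)"

text \<open>Bounds for the derivative of \<open>\<tau> \<mapsto> \<tau> powr \<rho>\<close> on \<open>[a,b]\<close>; through them the
  kernel is comparable to the Riemann--Liouville kernel \<open>(t - \<tau>) powr (-\<alpha>)\<close>.\<close>
definition slope_min :: real where
  "slope_min = \<rho> * min (a powr (\<rho>-1)) (b powr (\<rho>-1))"

definition slope_max :: real where
  "slope_max = \<rho> * max (a powr (\<rho>-1)) (b powr (\<rho>-1))"

lemma slope_min_pos: "slope_min > 0"
  using params by (simp add: slope_min_def)

lemma slope_max_pos: "slope_max > 0"
  using params by (simp add: slope_max_def less_max_iff_disj)

lemma powr_rho_diff_bounds:
  assumes "a \<le> \<tau>" "\<tau> \<le> t" "t \<le> b"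
  shows "slope_min * (t - \<tau>) \<le> t powr \<rho> - \<tau> powr \<rho>"
    and "t powr \<rho> - \<tau> powr \<rho> \<le> slope_max * (t - \<tau>)"
proof -
  have "slope_min * (t - \<tau>) \<le> t powr \<rho> - \<tau> powr \<rho> \<and> t powr \<rho> - \<tau> powr \<rho> \<le> slope_max * (t - \<tau>)"
  proof (cases "\<tau> = t")
    case False
    then have lt: "\<tau> < t" using assms by simp
    have "\<exists>z. \<tau> < z \<and> z < t \<and> t powr \<rho> - \<tau> powr \<rho> = (t - \<tau>) * (\<rho> * z powr (\<rho> - 1))"
      by (rule MVT2[OF lt]) (use assms params in \<open>auto intro!: has_real_derivative_powr\<close>)
    then obtain z where z: "\<tau> < z" "z < t" "t powr \<rho> - \<tau> powr \<rho> = (t - \<tau>) * (\<rho> * z powr (\<rho> - 1))"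
      by blast
    have "min (a powr (\<rho>-1)) (b powr (\<rho>-1)) \<le> z powr (\<rho>-1)"
         "z powr (\<rho>-1) \<le> max (a powr (\<rho>-1)) (b powr (\<rho>-1))"
      using powr_between_endpoints[of a z b "\<rho> - 1"] z assms params by auto
    then show ?thesis
      using z lt params unfolding slope_min_def slope_max_def
      by (simp add: mult_left_mono mult.left_commute)
  qed simp
  then show "slope_min * (t - \<tau>) \<le> t powr \<rho> - \<tau> powr \<rho>"
    "t powr \<rho> - \<tau> powr \<rho> \<le> slope_max * (t - \<tau>)" by auto
qed

lemma kernel_nonneg: "kernel t \<tau> \<ge> 0"
  by (simp add: kernel_def)

lemma kernel_self [simp]: "kernel t t = 0"
  by (simp add: kernel_def)

lemma kernel_le:
  assumes "a \<le> \<tau>" "\<tau> \<le> t" "t \<le> b"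
  shows "kernel t \<tau> \<le> slope_min powr (-\<alpha>) * (t - \<tau>) powr (-\<alpha>)"
proof (cases "\<tau> = t")
  case False
  then have "slope_min * (t - \<tau>) > 0" using assms slope_min_pos by simp
  then have "(t powr \<rho> - \<tau> powr \<rho>) powr (-\<alpha>) \<le> (slope_min * (t - \<tau>)) powr (-\<alpha>)"
    using powr_rho_diff_bounds(1)[OF assms] params by (intro powr_mono2') auto
  then show ?thesis using slope_min_pos assms by (simp add: kernel_def powr_mult)
qed (simp add: kernel_def)

lemma kernel_ge:
  assumes "a \<le> \<tau>" "\<tau> < t" "t \<le> b"
  shows "slope_max powr (-\<alpha>) * (t - \<tau>) powr (-\<alpha>) \<le> kernel t \<tau>"
proof -
  have "t powr \<rho> - \<tau> powr \<rho> > 0" using assms params by (simp add: powr_less_mono2)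
  then have "(slope_max * (t - \<tau>)) powr (-\<alpha>) \<le> (t powr \<rho> - \<tau> powr \<rho>) powr (-\<alpha>)"
    using powr_rho_diff_bounds(2)[of \<tau> t] assms params by (intro powr_mono2') auto
  then show ?thesis using slope_max_pos assms by (simp add: kernel_def powr_mult)
qed

lemma kernel_mono:
  assumes "a \<le> \<tau>" "\<tau> \<le> \<sigma>" "\<sigma> < t"
  shows "kernel t \<tau> \<le> kernel t \<sigma>"
proof -
  have "\<tau> powr \<rho> \<le> \<sigma> powr \<rho>" using assms params by (intro powr_mono2) auto
  moreover have "t powr \<rho> - \<sigma> powr \<rho> > 0" using assms params by (simp add: powr_less_mono2)
  ultimately show ?thesis unfolding kernel_def using params by (intro powr_mono2') auto
qed

definition kernel_lipschitz_const :: "real \<Rightarrow> real" where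
  "kernel_lipschitz_const d = \<alpha> * (slope_min * d) powr (-\<alpha> - 1) * slope_max"

lemma kernel_lipschitz_const_nonneg: "kernel_lipschitz_const d \<ge> 0"
  using params slope_max_pos by (simp add: kernel_lipschitz_const_def)

lemma kernel_lipschitz:
  assumes "a \<le> c" "c \<le> \<tau>" "\<tau> + d \<le> t" "t \<le> b" "d > 0"
  shows "kernel t \<tau> - kernel t c \<le> kernel_lipschitz_const d * (\<tau> - c)"
proof -
  define u where "u = t powr \<rho> - \<tau> powr \<rho>"
  define v where "v = t powr \<rho> - c powr \<rho>"
  have "slope_min * d \<le> slope_min * (t - \<tau>)"
    using slope_min_pos assms by (intro mult_left_mono) auto
  also have "\<dots> \<le> u" unfolding u_def using powr_rho_diff_bounds(1)[of \<tau> t] assms by auto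
  finally have u: "slope_min * d \<le> u" .
  have "0 < slope_min * d" using slope_min_pos assms by simp
  have "u \<le> v" unfolding u_def v_def using assms params by (auto intro!: powr_mono2)
  have "v - u \<le> slope_max * (\<tau> - c)"
    unfolding u_def v_def using powr_rho_diff_bounds(2)[of c \<tau>] assms by auto
  have "kernel t \<tau> - kernel t c = u powr (-\<alpha>) - v powr (-\<alpha>)" by (simp add: kernel_def u_def v_def)
  also have "\<dots> \<le> \<alpha> * u powr (-\<alpha> - 1) * (v - u)"
    using \<open>0 < slope_min * d\<close> u \<open>u \<le> v\<close> params by (intro powr_neg_diff_le) auto
  also have "\<dots> \<le> \<alpha> * (slope_min * d) powr (-\<alpha> - 1) * (slope_max * (\<tau> - c))"
    using u \<open>0 < slope_min * d\<close> \<open>u \<le> v\<close> \<open>v - u \<le> slope_max * (\<tau> - c)\<close> params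
    by (intro mult_mono mult_left_mono powr_mono2') auto
  finally show ?thesis by (simp add: kernel_lipschitz_const_def algebra_simps)
qed

lemma kernel_measurable: "(\<lambda>\<tau>. kernel t \<tau>) \<in> borel_measurable (lebesgue_on S)"
  unfolding kernel_def
  by (intro powr_real_measurable borel_measurable_diff measurable_const
        id_borel_measurable_lebesgue_on[unfolded id_def]) auto

lemma kernel_mult_integrable:
  assumes "a \<le> u" "u \<le> t" "t \<le> b" "continuous_on {u..t} f"
    and "\<And>\<tau>. \<tau> \<in> {u..t} \<Longrightarrow> \<bar>f \<tau>\<bar> \<le> B"
  shows "(\<lambda>\<tau>. kernel t \<tau> * f \<tau>) integrable_on {u..t}"
    and "\<bar>integral {u..t} (\<lambda>\<tau>. kernel t \<tau> * f \<tau>)\<bar>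
           \<le> B * slope_min powr (-\<alpha>) * ((t - u) powr (1 - \<alpha>) / (1 - \<alpha>))"
proof -
  let ?g = "\<lambda>\<tau>. B * slope_min powr (-\<alpha>) * (t - \<tau>) powr (-\<alpha>)"
  have meas: "(\<lambda>\<tau>. kernel t \<tau> * f \<tau>) \<in> borel_measurable (lebesgue_on {u..t})"
    using assms(4)
    by (intro borel_measurable_times kernel_measurable continuous_imp_measurable_on_sets_lebesgue) auto
  have g: "(?g has_integral B * slope_min powr (-\<alpha>) * ((t - u) powr (1 - \<alpha>) / (1 - \<alpha>))) {u..t}"
    using has_integral_singular_powr[OF params(4) assms(2)] by (intro has_integral_mult_right)
  have bound: "\<bar>kernel t \<tau> * f \<tau>\<bar> \<le> ?g \<tau>" if "\<tau> \<in> {u..t}" for \<tau>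
  proof -
    have "\<bar>kernel t \<tau> * f \<tau>\<bar> = kernel t \<tau> * \<bar>f \<tau>\<bar>" by (simp add: abs_mult kernel_nonneg)
    also have "\<dots> \<le> (slope_min powr (-\<alpha>) * (t - \<tau>) powr (-\<alpha>)) * B"
      using that assms kernel_le[of \<tau> t] kernel_nonneg by (intro mult_mono) auto
    finally show ?thesis by (simp add: algebra_simps)
  qed
  show int: "(\<lambda>\<tau>. kernel t \<tau> * f \<tau>) integrable_on {u..t}"
    using measurable_bounded_by_integrable_imp_integrable_real[OF meas _ bound] g
    by (auto simp: has_integral_iff)
  show "\<bar>integral {u..t} (\<lambda>\<tau>. kernel t \<tau> * f \<tau>)\<bar>
          \<le> B * slope_min powr (-\<alpha>) * ((t - u) powr (1 - \<alpha>) / (1 - \<alpha>))"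
    using integral_norm_bound_integral[OF int, of ?g] g bound by (auto simp: has_integral_iff)
qed

text \<open>Substituting \<open>\<tau> = a + (t - a) \<theta>\<close> moves the dependence on \<open>t\<close> from the domain of
  integration into the integrand, where dominated convergence applies.\<close>
definition rescaled_integrand :: "(real \<Rightarrow> real) \<Rightarrow> real \<Rightarrow> real \<Rightarrow> real" where
  "rescaled_integrand f t \<theta> = (t - a) * (kernel t (a + (t - a) * \<theta>) * f (a + (t - a) * \<theta>))"

lemma rescaled_integrand_abs_le:
  assumes "t \<in> {a..b}" "\<theta> \<in> {0..1}" "\<And>\<tau>. \<tau> \<in> {a..b} \<Longrightarrow> \<bar>f \<tau>\<bar> \<le> B"
  shows "\<bar>rescaled_integrand f t \<theta>\<bar>
           \<le> B * slope_min powr (-\<alpha>) * (t - a) powr (1 - \<alpha>) * (1 - \<theta>) powr (-\<alpha>)"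
proof (cases "t = a \<or> \<theta> = 1")
  case True
  have "B \<ge> 0" using assms(3)[of a] params by auto
  with True show ?thesis by (auto simp: rescaled_integrand_def)
next
  case False
  then have ta: "t > a" and th: "\<theta> < 1" using assms by auto
  define \<tau> where "\<tau> = a + (t - a) * \<theta>"
  have "(t - a) * \<theta> \<le> t - a" "0 \<le> (t - a) * \<theta>" using ta th assms by (auto intro: mult_left_le)
  then have \<tau>: "a \<le> \<tau>" "\<tau> \<le> t" unfolding \<tau>_def by linarith+
  have t_minus_\<tau>: "t - \<tau> = (t - a) * (1 - \<theta>)" by (simp add: \<tau>_def algebra_simps)
  have "\<bar>rescaled_integrand f t \<theta>\<bar> = (t - a) * kernel t \<tau> * \<bar>f \<tau>\<bar>"
    using ta by (simp add: rescaled_integrand_def \<tau>_def abs_mult kernel_nonneg)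
  also have "\<dots> \<le> (t - a) * (slope_min powr (-\<alpha>) * (t - \<tau>) powr (-\<alpha>)) * B"
    using \<tau> assms kernel_le[of \<tau> t] ta kernel_nonneg by (intro mult_mono mult_left_mono) auto
  also have "(t - \<tau>) powr (-\<alpha>) = (t - a) powr (-\<alpha>) * (1 - \<theta>) powr (-\<alpha>)"
    using ta th by (simp add: t_minus_\<tau> powr_mult)
  also have "(t - a) * (slope_min powr (-\<alpha>) * ((t - a) powr (-\<alpha>) * (1 - \<theta>) powr (-\<alpha>))) * B
      = B * slope_min powr (-\<alpha>) * ((t - a) powr 1 * (t - a) powr (-\<alpha>)) * (1 - \<theta>) powr (-\<alpha>)"
    using ta by simp
  also have "(t - a) powr 1 * (t - a) powr (-\<alpha>) = (t - a) powr (1 - \<alpha>)"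
    by (simp only: powr_add[symmetric]) simp
  finally show ?thesis .
qed

lemma rescaled_integrand_tendsto:
  assumes f: "continuous_on {a..b} f" and bound: "\<And>\<tau>. \<tau> \<in> {a..b} \<Longrightarrow> \<bar>f \<tau>\<bar> \<le> B"
    and u: "\<forall>n. u n \<in> {a..b}" and t0: "t0 \<in> {a..b}" and lim: "u \<longlonglongrightarrow> t0"
    and \<theta>: "\<theta> \<in> {0..1}"
  shows "(\<lambda>n. rescaled_integrand f (u n) \<theta>) \<longlonglongrightarrow> rescaled_integrand f t0 \<theta>"
proof -
  consider "\<theta> = 1" | "t0 = a" | "\<theta> < 1" "a < t0" using \<theta> t0 by fastforce
  then show ?thesis
  proof cases
    case 1
    then show ?thesis by (simp add: rescaled_integrand_def)
  next
    case 2
    let ?g = "\<lambda>s. B * slope_min powr (-\<alpha>) * (s - a) powr (1 - \<alpha>) * (1 - \<theta>) powr (-\<alpha>)"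
    have "(\<lambda>n. ?g (u n)) \<longlonglongrightarrow> ?g t0"
      using params u by (intro tendsto_intros lim) auto
    then have "(\<lambda>n. ?g (u n)) \<longlonglongrightarrow> 0" using 2 params by simp
    then have "(\<lambda>n. rescaled_integrand f (u n) \<theta>) \<longlonglongrightarrow> 0"
      by (rule Lim_null_comparison[rotated])
         (use rescaled_integrand_abs_le[OF _ \<theta> bound] u in \<open>auto intro: always_eventually\<close>)
    then show ?thesis using 2 by (simp add: rescaled_integrand_def)
  next
    case 3
    define \<tau>0 where "\<tau>0 = a + (t0 - a) * \<theta>"
    have "(t0 - a) * \<theta> < t0 - a" using mult_strict_left_mono[of \<theta> 1 "t0 - a"] 3 by simp
    moreover have "0 \<le> (t0 - a) * \<theta>" using 3 \<theta> by simp
    ultimately have \<tau>0: "\<tau>0 < t0" "a \<le> \<tau>0" unfolding \<tau>0_def by linarith+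
    then have nonzero: "t0 powr \<rho> - \<tau>0 powr \<rho> \<noteq> 0"
      using powr_less_mono2[of \<rho> \<tau>0 t0] params by auto
    have in_ab: "a + (s - a) * \<theta> \<in> {a..b}" if "s \<in> {a..b}" for s
      using that \<theta> mult_left_mono[of \<theta> 1 "s - a"] by auto
    have arg: "(\<lambda>n. a + (u n - a) * \<theta>) \<longlonglongrightarrow> \<tau>0"
      unfolding \<tau>0_def by (intro tendsto_intros lim)
    have "(\<lambda>n. f (a + (u n - a) * \<theta>)) \<longlonglongrightarrow> f \<tau>0"
      using continuous_on_tendsto_compose[OF f arg] in_ab t0 u by (auto simp: \<tau>0_def)
    moreover have "(\<lambda>n. (u n powr \<rho> - (a + (u n - a) * \<theta>) powr \<rho>) powr (-\<alpha>))
                     \<longlonglongrightarrow> (t0 powr \<rho> - \<tau>0 powr \<rho>) powr (-\<alpha>)"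
      using nonzero \<tau>0 3 params by (intro tendsto_powr tendsto_diff arg lim tendsto_const) auto
    ultimately show ?thesis
      unfolding rescaled_integrand_def kernel_def \<tau>0_def[symmetric]
      by (auto intro!: tendsto_intros lim simp: mult.commute)
  qed
qed

lemma kernel_integral_continuous:
  assumes f: "continuous_on {a..b} f"
  shows "continuous_on {a..b} (\<lambda>t. integral {a..t} (\<lambda>\<tau>. kernel t \<tau> * f \<tau>))"
proof (rule continuous_on_sequentiallyI)
  obtain B where "B \<ge> 0" and bound: "\<And>\<tau>. \<tau> \<in> {a..b} \<Longrightarrow> \<bar>f \<tau>\<bar> \<le> B"
    using continuous_on_abs_bound[OF f] by blast
  have rescale: "integral {a..t} (\<lambda>\<tau>. kernel t \<tau> * f \<tau>) = integral {0..1} (rescaled_integrand f t)"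
    and integrable: "rescaled_integrand f t integrable_on {0..1}" if "t \<in> {a..b}" for t
  proof -
    have "(\<lambda>\<tau>. kernel t \<tau> * f \<tau>) integrable_on {a..t}"
      using that bound f by (intro kernel_mult_integrable(1)[where B=B]) (auto intro: continuous_on_subset)
    then have "(rescaled_integrand f t has_integral integral {a..t} (\<lambda>\<tau>. kernel t \<tau> * f \<tau>)) {0..1}"
      unfolding rescaled_integrand_def
      using that by (intro has_integral_rescale_unit_interval) (auto simp: has_integral_integral)
    then show "integral {a..t} (\<lambda>\<tau>. kernel t \<tau> * f \<tau>) = integral {0..1} (rescaled_integrand f t)"
      and "rescaled_integrand f t integrable_on {0..1}"
      by (auto simp: integral_unique has_integral_integrable)
  qed
  let ?g = "\<lambda>\<theta>. B * slope_min powr (-\<alpha>) * (b - a) powr (1 - \<alpha>) * (1 - \<theta>) powr (-\<alpha>)"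
  have "(\<lambda>\<theta>. (1 - \<theta>) powr (-\<alpha>)) integrable_on {0..1}"
    using has_integral_singular_powr[of \<alpha> 0 1] params by (auto intro: has_integral_integrable)
  from integrable_on_cmult_left[OF this, of "B * slope_min powr (-\<alpha>) * (b - a) powr (1 - \<alpha>)"]
  have "?g integrable_on {0..1}" by simp
  moreover have "\<bar>rescaled_integrand f t \<theta>\<bar> \<le> ?g \<theta>" if "t \<in> {a..b}" "\<theta> \<in> {0..1}" for t \<theta>
  proof -
    have "\<bar>rescaled_integrand f t \<theta>\<bar>
            \<le> B * slope_min powr (-\<alpha>) * (t - a) powr (1 - \<alpha>) * (1 - \<theta>) powr (-\<alpha>)"
      using rescaled_integrand_abs_le[of t \<theta> f B] bound that by blast
    also have "\<dots> \<le> ?g \<theta>"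
      using that \<open>B \<ge> 0\<close> params by (intro mult_right_mono mult_left_mono powr_mono2) auto
    finally show ?thesis .
  qed
  moreover fix u t0 assume u: "\<forall>n. u n \<in> {a..b}" and t0: "t0 \<in> {a..b}" and lim: "u \<longlonglongrightarrow> t0"
  ultimately have "(\<lambda>n. integral {0..1} (rescaled_integrand f (u n))) \<longlonglongrightarrow> integral {0..1} (rescaled_integrand f t0)"
    using integrable rescaled_integrand_tendsto[OF f bound u t0 lim]
    by (intro dominated_convergence(2)[where h = ?g]) auto
  then show "(\<lambda>n. integral {a..u n} (\<lambda>\<tau>. kernel (u n) \<tau> * f \<tau>)) \<longlonglongrightarrow> integral {a..t0} (\<lambda>\<tau>. kernel t0 \<tau> * f \<tau>)"
    using rescale u t0 by simp
qed

definition caputo_const :: real where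
  "caputo_const = \<rho> powr \<alpha> / Gamma (1 - \<alpha>)"

lemma caputo_const_pos: "caputo_const > 0"
  using params by (simp add: caputo_const_def)

definition caputo_bound_const :: real where
  "caputo_bound_const = caputo_const * slope_min powr (-\<alpha>) * ((b - a) powr (1 - \<alpha>) / (1 - \<alpha>))"

lemma caputo_bound_const_nonneg: "caputo_bound_const \<ge> 0"
  using caputo_const_pos params by (simp add: caputo_bound_const_def)

lemma caputo_left_eq_kernel_integral:
  assumes y': "\<And>\<tau>. \<tau> \<in> {a..b} \<Longrightarrow> (y has_real_derivative y' \<tau>) (at \<tau> within {a..b})"
    and t: "t \<in> {a..b}"
  shows "caputo_left a b \<alpha> \<rho> y t = caputo_const * integral {a..t} (\<lambda>\<tau>. kernel t \<tau> * y' \<tau>)"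
proof -
  have "integral {a..t} (\<lambda>\<tau>. (t powr \<rho> - \<tau> powr \<rho>) powr (- \<alpha>) * vector_derivative y (at \<tau> within {a..b}))
      = integral {a..t} (\<lambda>\<tau>. kernel t \<tau> * y' \<tau>)"
  proof (rule integral_cong)
    fix \<tau> assume "\<tau> \<in> {a..t}"
    then have "vector_derivative y (at \<tau> within {a..b}) = y' \<tau>"
      using y'[of \<tau>] t params
      by (intro vector_derivative_within_closed_interval)
         (auto simp: has_real_derivative_iff_has_vector_derivative)
    then show "(t powr \<rho> - \<tau> powr \<rho>) powr (- \<alpha>) * vector_derivative y (at \<tau> within {a..b})
               = kernel t \<tau> * y' \<tau>"
      by (simp add: kernel_def)
  qed
  then show ?thesis unfolding caputo_left_def caputo_const_def by simp
qed

lemma kernel_mult_derivative_integrable: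
  assumes "continuous_on {a..b} y'" "t \<in> {a..b}"
  shows "(\<lambda>\<tau>. kernel t \<tau> * y' \<tau>) integrable_on {a..t}"
proof -
  obtain B where "\<And>\<tau>. \<tau> \<in> {a..b} \<Longrightarrow> \<bar>y' \<tau>\<bar> \<le> B"
    using continuous_on_abs_bound[OF assms(1)] by blast
  then show ?thesis
    using assms by (intro kernel_mult_integrable(1)[where B=B]) (auto intro: continuous_on_subset)
qed

lemma caputo_left_continuous:
  assumes "continuous_on {a..b} y'"
    and "\<And>\<tau>. \<tau> \<in> {a..b} \<Longrightarrow> (y has_real_derivative y' \<tau>) (at \<tau> within {a..b})"
  shows "continuous_on {a..b} (caputo_left a b \<alpha> \<rho> y)"
proof -
  have "continuous_on {a..b} (\<lambda>t. caputo_const * integral {a..t} (\<lambda>\<tau>. kernel t \<tau> * y' \<tau>))"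
    by (intro continuous_intros kernel_integral_continuous assms(1))
  then show ?thesis
    by (rule continuous_on_eq) (use caputo_left_eq_kernel_integral[OF assms(2)] in auto)
qed

lemma caputo_left_abs_le:
  assumes "continuous_on {a..b} y'"
    and "\<And>\<tau>. \<tau> \<in> {a..b} \<Longrightarrow> (y has_real_derivative y' \<tau>) (at \<tau> within {a..b})"
    and t: "t \<in> {a..b}" and B: "\<And>\<tau>. \<tau> \<in> {a..b} \<Longrightarrow> \<bar>y' \<tau>\<bar> \<le> B"
  shows "\<bar>caputo_left a b \<alpha> \<rho> y t\<bar> \<le> B * caputo_bound_const"
proof -
  have "\<bar>integral {a..t} (\<lambda>\<tau>. kernel t \<tau> * y' \<tau>)\<bar>
          \<le> B * slope_min powr (-\<alpha>) * ((t - a) powr (1 - \<alpha>) / (1 - \<alpha>))"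
    using t B assms(1) by (intro kernel_mult_integrable(2)) (auto intro: continuous_on_subset)
  also have "\<dots> \<le> B * slope_min powr (-\<alpha>) * ((b - a) powr (1 - \<alpha>) / (1 - \<alpha>))"
    using t params B[of a] by (intro mult_left_mono divide_right_mono powr_mono2) auto
  finally have "caputo_const * \<bar>integral {a..t} (\<lambda>\<tau>. kernel t \<tau> * y' \<tau>)\<bar>
      \<le> caputo_const * (B * slope_min powr (-\<alpha>) * ((b - a) powr (1 - \<alpha>) / (1 - \<alpha>)))"
    using caputo_const_pos by (intro mult_left_mono) auto
  then show ?thesis
    using caputo_left_eq_kernel_integral[OF assms(2) t] caputo_const_pos
    by (simp add: caputo_bound_const_def abs_mult mult_ac)
qed

lemma caputo_left_add_scaled:
  assumes "continuous_on {a..b} y'"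
    and y': "\<And>\<tau>. \<tau> \<in> {a..b} \<Longrightarrow> (y has_real_derivative y' \<tau>) (at \<tau> within {a..b})"
    and "continuous_on {a..b} z'"
    and z': "\<And>\<tau>. \<tau> \<in> {a..b} \<Longrightarrow> (z has_real_derivative z' \<tau>) (at \<tau> within {a..b})"
    and t: "t \<in> {a..b}"
  shows "caputo_left a b \<alpha> \<rho> (\<lambda>t. y t + s * z t) t
           = caputo_left a b \<alpha> \<rho> y t + s * caputo_left a b \<alpha> \<rho> z t"
proof -
  have yz': "((\<lambda>t. y t + s * z t) has_real_derivative y' \<tau> + s * z' \<tau>) (at \<tau> within {a..b})"
    if "\<tau> \<in> {a..b}" for \<tau>
    using y'[OF that] z'[OF that] by (auto intro!: derivative_eq_intros)
  have "integral {a..t} (\<lambda>\<tau>. kernel t \<tau> * (y' \<tau> + s * z' \<tau>))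
          = integral {a..t} (\<lambda>\<tau>. kernel t \<tau> * y' \<tau>) + s * integral {a..t} (\<lambda>\<tau>. kernel t \<tau> * z' \<tau>)"
    using integral_add[OF kernel_mult_derivative_integrable[OF assms(1) t]
        integrable_on_cmult_left[OF kernel_mult_derivative_integrable[OF assms(3) t], of s]]
    by (simp add: distrib_left mult.left_commute[of _ s])
  moreover note caputo_left_eq_kernel_integral[OF yz' t]
    caputo_left_eq_kernel_integral[OF y' t] caputo_left_eq_kernel_integral[OF z' t]
  ultimately show ?thesis by (simp add: algebra_simps)
qed

lemma caputo_left_scale:
  assumes z': "\<And>\<tau>. \<tau> \<in> {a..b} \<Longrightarrow> (z has_real_derivative z' \<tau>) (at \<tau> within {a..b})"
    and t: "t \<in> {a..b}"
  shows "caputo_left a b \<alpha> \<rho> (\<lambda>t. s * z t) t = s * caputo_left a b \<alpha> \<rho> z t"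
proof -
  have sz': "((\<lambda>t. s * z t) has_real_derivative s * z' \<tau>) (at \<tau> within {a..b})"
    if "\<tau> \<in> {a..b}" for \<tau>
    using z'[OF that] by (auto intro!: derivative_eq_intros)
  have "integral {a..t} (\<lambda>\<tau>. kernel t \<tau> * (s * z' \<tau>)) = s * integral {a..t} (\<lambda>\<tau>. kernel t \<tau> * z' \<tau>)"
    using integral_mult_right[of "{a..t}" s "\<lambda>\<tau>. kernel t \<tau> * z' \<tau>"] by (simp add: mult.left_commute[of _ s])
  moreover note caputo_left_eq_kernel_integral[OF sz' t] caputo_left_eq_kernel_integral[OF z' t]
  ultimately show ?thesis by simp
qed

lemma frac_norm_scaled_le:
  assumes "continuous_on {a..b} h'"
    and "\<And>\<tau>. \<tau> \<in> {a..b} \<Longrightarrow> (h has_real_derivative h' \<tau>) (at \<tau> within {a..b})"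
    and "\<And>\<tau>. \<tau> \<in> {a..b} \<Longrightarrow> \<bar>h \<tau>\<bar> \<le> B" "\<And>\<tau>. \<tau> \<in> {a..b} \<Longrightarrow> \<bar>h' \<tau>\<bar> \<le> B'"
  shows "frac_norm a b \<alpha> \<rho> (\<lambda>t. \<sigma> * h t) \<le> \<bar>\<sigma>\<bar> * (B + B' * caputo_bound_const)"
proof -
  have "(SUP t\<in>{a..b}. \<bar>\<sigma> * h t\<bar>) \<le> \<bar>\<sigma>\<bar> * B"
    using assms(3) params by (intro cSUP_least) (auto simp: abs_mult mult_left_mono)
  moreover have "(SUP t\<in>{a..b}. \<bar>caputo_left a b \<alpha> \<rho> (\<lambda>t. \<sigma> * h t) t\<bar>) \<le> \<bar>\<sigma>\<bar> * (B' * caputo_bound_const)"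
    using caputo_left_scale[OF assms(2)] caputo_left_abs_le[OF assms(1,2) _ assms(4)] params
    by (intro cSUP_least) (auto simp: abs_mult mult_left_mono)
  ultimately show ?thesis unfolding frac_norm_def by (simp add: distrib_left)
qed

lemma J_fun_add_scaled:
  assumes "continuous_on {a..b} y'"
    and "\<And>\<tau>. \<tau> \<in> {a..b} \<Longrightarrow> (y has_real_derivative y' \<tau>) (at \<tau> within {a..b})"
    and "continuous_on {a..b} h'"
    and "\<And>\<tau>. \<tau> \<in> {a..b} \<Longrightarrow> (h has_real_derivative h' \<tau>) (at \<tau> within {a..b})"
  shows "J_fun a b \<alpha> \<rho> L (\<lambda>t. y t + \<sigma> * h t)
           = integral {a..b} (\<lambda>t. L t (y t + \<sigma> * h t)
                (caputo_left a b \<alpha> \<rho> y t + \<sigma> * caputo_left a b \<alpha> \<rho> h t))"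
  unfolding J_fun_def using caputo_left_add_scaled[OF assms] by (intro integral_cong) simp

lemma bump_has_real_derivative_within:
  "(bump c e has_real_derivative bump' c e \<tau>) (at \<tau> within {a..b})"
  by (rule has_field_derivative_at_within[OF bump_has_real_derivative])

lemma caputo_bump_eq:
  assumes "e > 0" "a \<le> c" "c \<le> t" "t \<le> b"
  shows "caputo_left a b \<alpha> \<rho> (bump c e) t = caputo_const * integral {c..t} (\<lambda>\<tau>. kernel t \<tau> * bump' c e \<tau>)"
proof -
  let ?f = "\<lambda>\<tau>. kernel t \<tau> * bump' c e \<tau>"
  have "?f integrable_on {a..t}"
    using assms by (intro kernel_mult_derivative_integrable continuous_on_bump') auto
  then have "integral {a..c} ?f + integral {c..t} ?f = integral {a..t} ?f"
    using assms by (intro Henstock_Kurzweil_Integration.integral_combine) auto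
  moreover have "integral {a..c} ?f = 0"
    using assms bump_outside(2)[of _ c e] by (subst integral_cong[of _ _ "\<lambda>_. 0"]) auto
  ultimately show ?thesis
    using caputo_left_eq_kernel_integral[OF bump_has_real_derivative_within] assms by simp
qed

lemma caputo_bump_before:
  assumes "e > 0" "t \<in> {a..b}" "t \<le> c"
  shows "caputo_left a b \<alpha> \<rho> (bump c e) t = 0"
proof -
  have "integral {a..t} (\<lambda>\<tau>. kernel t \<tau> * bump' c e \<tau>) = integral {a..t} (\<lambda>\<tau>. 0)"
    using assms bump_outside(2)[of _ c e] by (intro integral_cong) auto
  then show ?thesis
    using caputo_left_eq_kernel_integral[OF bump_has_real_derivative_within assms(2)] by simp
qed

definition near_bound :: "real \<Rightarrow> real" where
  "near_bound e = caputo_const * ((e^3 / 2) * slope_min powr (-\<alpha>) * (e powr (1 - \<alpha>) / (1 - \<alpha>)))"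

definition low_bound :: "real \<Rightarrow> real" where
  "low_bound e = caputo_const * (slope_max powr (-\<alpha>) * (e / 2) powr (-\<alpha>) * (e^4 / 64))"

definition far_bound :: "real \<Rightarrow> real \<Rightarrow> real" where
  "far_bound d e = caputo_const * (kernel_lipschitz_const d * e^5 / 2)"

lemma caputo_bump_abs_le_on_support:
  assumes "e > 0" "a \<le> c" "c \<le> t" "t \<le> c + e" "t \<le> b"
  shows "\<bar>caputo_left a b \<alpha> \<rho> (bump c e) t\<bar> \<le> near_bound e"
proof -
  have "\<bar>integral {c..t} (\<lambda>\<tau>. kernel t \<tau> * bump' c e \<tau>)\<bar>
          \<le> (e^3 / 2) * slope_min powr (-\<alpha>) * ((t - c) powr (1 - \<alpha>) / (1 - \<alpha>))"
    using assms bump_bounds(3)[OF assms(1)] by (intro kernel_mult_integrable(2) continuous_on_bump') auto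
  also have "\<dots> \<le> (e^3 / 2) * slope_min powr (-\<alpha>) * (e powr (1 - \<alpha>) / (1 - \<alpha>))"
    using assms params by (intro mult_left_mono divide_right_mono powr_mono2) auto
  finally have "caputo_const * \<bar>integral {c..t} (\<lambda>\<tau>. kernel t \<tau> * bump' c e \<tau>)\<bar>
      \<le> caputo_const * ((e^3 / 2) * slope_min powr (-\<alpha>) * (e powr (1 - \<alpha>) / (1 - \<alpha>)))"
    using caputo_const_pos by (intro mult_left_mono) auto
  then show ?thesis
    using caputo_bump_eq[of e c t] assms caputo_const_pos by (simp add: abs_mult near_bound_def)
qed

text \<open>On \<open>[c + e/4, c + e/2]\<close> the kernel is smallest at \<open>\<tau> = c\<close> and \<open>bump'\<close> is nonnegative,
  so the Caputo derivative dominates \<open>kernel t c * bump c e t\<close>.\<close>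
lemma caputo_bump_ge:
  assumes "e > 0" "a \<le> c" "c + e / 4 \<le> t" "t \<le> c + e / 2" "t \<le> b"
  shows "low_bound e \<le> caputo_left a b \<alpha> \<rho> (bump c e) t"
proof -
  define f where "f \<tau> = (if \<tau> = t then 0 else kernel t c * bump' c e \<tau>)" for \<tau>
  have "((\<lambda>\<tau>. kernel t c * bump' c e \<tau>) has_integral kernel t c * (bump c e t - bump c e c)) {c..t}"
    using has_integral_bump'[of c t c e] assms by (intro has_integral_mult_right) auto
  then have "(f has_integral kernel t c * (bump c e t - bump c e c)) {c..t}"
    by (intro has_integral_spike[of "{t}" _ f "\<lambda>\<tau>. kernel t c * bump' c e \<tau>"]) (auto simp: f_def)
  then have f_int: "(f has_integral kernel t c * bump c e t) {c..t}"
    using bump_outside(1)[of c c e] assms by simp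
  have "(\<lambda>\<tau>. kernel t \<tau> * bump' c e \<tau>) integrable_on {c..t}"
    using assms bump_bounds(3)[OF assms(1)]
    by (intro kernel_mult_integrable(1)[where B = "e^3/2"] continuous_on_bump') auto
  moreover have "f \<tau> \<le> kernel t \<tau> * bump' c e \<tau>" if "\<tau> \<in> {c..t}" for \<tau>
  proof (cases "\<tau> = t")
    case False
    then have "kernel t c \<le> kernel t \<tau>" using that assms by (intro kernel_mono) auto
    moreover have "0 \<le> bump' c e \<tau>" using that assms by (intro bump'_nonneg) auto
    ultimately show ?thesis using False by (simp add: f_def mult_right_mono)
  qed (simp add: f_def)
  ultimately have "kernel t c * bump c e t \<le> integral {c..t} (\<lambda>\<tau>. kernel t \<tau> * bump' c e \<tau>)"
    using has_integral_le[OF f_int integrable_integral] by blast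
  moreover have "slope_max powr (-\<alpha>) * (e / 2) powr (-\<alpha>) \<le> slope_max powr (-\<alpha>) * (t - c) powr (-\<alpha>)"
    using assms params by (intro mult_left_mono powr_mono2') auto
  with kernel_ge[of c t] assms have "slope_max powr (-\<alpha>) * (e / 2) powr (-\<alpha>) \<le> kernel t c"
    by auto
  then have "slope_max powr (-\<alpha>) * (e / 2) powr (-\<alpha>) * (e^4 / 64) \<le> kernel t c * bump c e t"
    using bump_ge[of c e t] assms kernel_nonneg[of t c] by (intro mult_mono) auto
  ultimately show ?thesis
    using caputo_bump_eq[of e c t] assms caputo_const_pos by (simp add: mult_left_mono low_bound_def)
qed

text \<open>Past the support the kernel is Lipschitz in \<open>\<tau>\<close> and \<open>bump'\<close> has integral zero,
  so only the variation of the kernel over \<open>[c, c + e]\<close> contributes.\<close>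
lemma caputo_bump_abs_le_after:
  assumes "e > 0" "a \<le> c" "c + e + d \<le> t" "t \<le> b" "d > 0"
  shows "\<bar>caputo_left a b \<alpha> \<rho> (bump c e) t\<bar> \<le> far_bound d e"
proof -
  let ?f = "\<lambda>\<tau>. kernel t \<tau> * bump' c e \<tau>"
  define g where "g \<tau> = (kernel t \<tau> - kernel t c) * bump' c e \<tau>" for \<tau>
  have "?f integrable_on {c..t}"
    using assms bump_bounds(3)[OF assms(1)]
    by (intro kernel_mult_integrable(1)[where B = "e^3/2"] continuous_on_bump') auto
  then have "integral {c..c+e} ?f + integral {c+e..t} ?f = integral {c..t} ?f"
    using assms by (intro Henstock_Kurzweil_Integration.integral_combine) auto
  moreover have "integral {c+e..t} ?f = 0"
    using assms bump_outside(2)[of _ c e] by (subst integral_cong[of _ _ "\<lambda>_. 0"]) auto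
  ultimately have split: "integral {c..t} ?f = integral {c..c+e} ?f" by simp
  have "continuous_on {c..c+e} (\<lambda>\<tau>. kernel t \<tau>)"
    unfolding kernel_def
  proof (intro continuous_intros ballI)
    fix \<tau> assume "\<tau> \<in> {c..c+e}"
    then show "t powr \<rho> - \<tau> powr \<rho> \<noteq> 0"
      using assms params powr_less_mono2[of \<rho> \<tau> t] by auto
  qed (use assms params in auto)
  then have g_cont: "continuous_on {c..c+e} g"
    unfolding g_def by (intro continuous_intros continuous_on_bump')
  then have g_int: "(g has_integral integral {c..c+e} g) {c..c+e}"
    by (intro integrable_integral integrable_continuous_interval)
  have "((\<lambda>\<tau>. kernel t c * bump' c e \<tau>) has_integral kernel t c * (bump c e (c+e) - bump c e c)) {c..c+e}"
    using has_integral_bump'[of c "c+e" c e] assms by (intro has_integral_mult_right) auto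
  then have "((\<lambda>\<tau>. kernel t c * bump' c e \<tau>) has_integral 0) {c..c+e}"
    using bump_outside(1)[of c c e] bump_outside(1)[of "c+e" c e] assms by simp
  from has_integral_add[OF g_int this] have "integral {c..c+e} ?f = integral {c..c+e} g"
    by (simp add: g_def algebra_simps integral_unique)
  then have caputo_eq: "\<bar>caputo_left a b \<alpha> \<rho> (bump c e) t\<bar> = caputo_const * \<bar>integral {c..c+e} g\<bar>"
    using caputo_bump_eq[of e c t] split assms caputo_const_pos by (simp add: abs_mult)
  have "\<bar>g \<tau>\<bar> \<le> kernel_lipschitz_const d * e * (e^3 / 2)" if "\<tau> \<in> {c..c+e}" for \<tau>
  proof -
    have "0 \<le> kernel t \<tau> - kernel t c" using kernel_mono[of c \<tau> t] that assms by auto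
    moreover have "kernel t \<tau> - kernel t c \<le> kernel_lipschitz_const d * e"
    proof -
      have "kernel t \<tau> - kernel t c \<le> kernel_lipschitz_const d * (\<tau> - c)"
        using that assms by (intro kernel_lipschitz) auto
      also have "\<dots> \<le> kernel_lipschitz_const d * e"
        using that kernel_lipschitz_const_nonneg[of d] by (intro mult_left_mono) auto
      finally show ?thesis .
    qed
    ultimately show ?thesis
      unfolding g_def abs_mult using bump_bounds(3)[OF assms(1), of c \<tau>] by (intro mult_mono) auto
  qed
  then have "norm (integral {c..c+e} g) \<le> kernel_lipschitz_const d * e * (e^3 / 2) * ((c + e) - c)"
    using assms by (intro integral_bound g_cont) auto
  also have "\<dots> = kernel_lipschitz_const d * e^5 / 2"
    by (simp add: eval_nat_numeral)
  finally show ?thesis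
    unfolding caputo_eq far_bound_def using caputo_const_pos by (intro mult_left_mono) auto
qed

lemma bump_gain_dominates:
  assumes "M \<ge> 0" "D \<ge> 0" "\<kappa> > 0" "d > 0"
  obtains e0 where "e0 > 0" "\<And>e. 0 < e \<Longrightarrow> e < e0 \<Longrightarrow>
      e * (M * (e^4 / 16)\<^sup>2 + M * (e^4 / 16) * near_bound e) + D * (M * (far_bound d e)\<^sup>2)
      < e / 4 * (\<kappa> * (low_bound e)\<^sup>2)"
proof -
  define A where "A = caputo_const * slope_min powr (-\<alpha>) / (2 * (1 - \<alpha>))"
  define B where "B = caputo_const * slope_max powr (-\<alpha>) / 64"
  define C where "C = caputo_const * kernel_lipschitz_const d / 2"
  have "near_bound e = A * (e^3 * e powr (1 - \<alpha>))" "low_bound e = B * ((e / 2) powr (-\<alpha>) * e^4)"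
    "far_bound d e = C * e^5" for e
    using params by (simp_all add: near_bound_def low_bound_def far_bound_def A_def B_def C_def field_simps)
  moreover obtain e0 where "e0 > 0" "\<And>e. 0 < e \<Longrightarrow> e < e0 \<Longrightarrow>
      e * (M * (e^4 / 16)\<^sup>2 + M * (e^4 / 16) * (A * (e^3 * e powr (1 - \<alpha>)))) + D * (M * (C * e^5)\<^sup>2)
      < e / 4 * (\<kappa> * (B * ((e / 2) powr (-\<alpha>) * e^4))\<^sup>2)"
    using bump_error_terms_small[of \<alpha> M A B C D \<kappa>] assms params caputo_const_pos slope_max_pos
      kernel_lipschitz_const_nonneg[of d]
    by (auto simp: A_def B_def C_def)
  ultimately show ?thesis using that by presburger
qed

end

section \<open>The second variation\<close>

locale legendre_setting = katugampola_interval +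
  fixes L L2 L3 L22 L23 L32 L33 :: "real \<Rightarrow> real \<Rightarrow> real \<Rightarrow> real"
    and x :: "real \<Rightarrow> real" and xa xb :: real
  assumes L_cont: "continuous_on ({a..b} \<times> UNIV \<times> UNIV) (\<lambda>(t, u, v). L t u v)"
    and L2: "\<And>t u v. t \<in> {a..b} \<Longrightarrow> ((\<lambda>u. L t u v) has_real_derivative L2 t u v) (at u)"
    and L3: "\<And>t u v. t \<in> {a..b} \<Longrightarrow> ((\<lambda>v. L t u v) has_real_derivative L3 t u v) (at v)"
    and L22: "\<And>t u v. t \<in> {a..b} \<Longrightarrow> ((\<lambda>u. L2 t u v) has_real_derivative L22 t u v) (at u)"
    and L23: "\<And>t u v. t \<in> {a..b} \<Longrightarrow> ((\<lambda>v. L2 t u v) has_real_derivative L23 t u v) (at v)"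
    and L32: "\<And>t u v. t \<in> {a..b} \<Longrightarrow> ((\<lambda>u. L3 t u v) has_real_derivative L32 t u v) (at u)"
    and L33: "\<And>t u v. t \<in> {a..b} \<Longrightarrow> ((\<lambda>v. L3 t u v) has_real_derivative L33 t u v) (at v)"
    and L2_cont: "continuous_on ({a..b} \<times> UNIV \<times> UNIV) (\<lambda>(t, u, v). L2 t u v)"
    and L22_cont: "continuous_on ({a..b} \<times> UNIV \<times> UNIV) (\<lambda>(t, u, v). L22 t u v)"
    and L23_cont: "continuous_on ({a..b} \<times> UNIV \<times> UNIV) (\<lambda>(t, u, v). L23 t u v)"
    and L32_cont: "continuous_on ({a..b} \<times> UNIV \<times> UNIV) (\<lambda>(t, u, v). L32 t u v)"
    and L33_cont: "continuous_on ({a..b} \<times> UNIV \<times> UNIV) (\<lambda>(t, u, v). L33 t u v)"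
    and min: "local_minimizer a b \<alpha> \<rho> L (U_set a b xa xb) x"
begin

abbreviation CD :: "(real \<Rightarrow> real) \<Rightarrow> real \<Rightarrow> real" where
  "CD y \<equiv> caputo_left a b \<alpha> \<rho> y"

definition hessian_form :: "real \<Rightarrow> real \<Rightarrow> real \<Rightarrow> real \<Rightarrow> real \<Rightarrow> real" where
  "hessian_form t u v p q = (L22 t u v * p + L23 t u v * q) * p + (L32 t u v * p + L33 t u v * q) * q"

definition second_variation :: "(real \<Rightarrow> real) \<Rightarrow> real" where
  "second_variation h = integral {a..b} (\<lambda>t. hessian_form t (x t) (CD x t) (h t) (CD h t))"

lemma minimizer_C1:
  obtains x' where "continuous_on {a..b} x'"
    "\<And>\<tau>. \<tau> \<in> {a..b} \<Longrightarrow> (x has_real_derivative x' \<tau>) (at \<tau> within {a..b})"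
  using min unfolding local_minimizer_def U_set_def C1_on_def by blast

lemma continuous_on_minimizer: "continuous_on {a..b} x"
  using minimizer_C1 DERIV_continuous_on by metis

lemma continuous_on_CD_minimizer: "continuous_on {a..b} (CD x)"
  using minimizer_C1 caputo_left_continuous by metis

lemma continuous_on_along_minimizer:
  fixes G :: "real \<Rightarrow> real \<Rightarrow> real \<Rightarrow> real"
  assumes "continuous_on ({a..b} \<times> UNIV \<times> UNIV) (\<lambda>(t, u, v). G t u v)"
  shows "continuous_on {a..b} (\<lambda>t. G t (x t) (CD x t))"
  by (rule continuous_on_compose3[OF assms continuous_on_minimizer continuous_on_CD_minimizer])

lemma minimizer_le_variation:
  assumes h'c: "continuous_on {a..b} h'"
    and h': "\<And>\<tau>. \<tau> \<in> {a..b} \<Longrightarrow> (h has_real_derivative h' \<tau>) (at \<tau> within {a..b})"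
    and "h a = 0" "h b = 0"
  obtains s0 where "s0 > 0"
    "\<And>\<sigma>. \<bar>\<sigma>\<bar> < s0 \<Longrightarrow> J_fun a b \<alpha> \<rho> L x \<le> J_fun a b \<alpha> \<rho> L (\<lambda>t. x t + \<sigma> * h t)"
proof -
  obtain x' where x'c: "continuous_on {a..b} x'"
    and x': "\<And>\<tau>. \<tau> \<in> {a..b} \<Longrightarrow> (x has_real_derivative x' \<tau>) (at \<tau> within {a..b})"
    using minimizer_C1 by blast
  obtain \<epsilon> where "\<epsilon> > 0" and local_min: "\<And>y. y \<in> U_set a b xa xb \<Longrightarrow>
      frac_norm a b \<alpha> \<rho> (\<lambda>t. y t - x t) < \<epsilon> \<Longrightarrow> J_fun a b \<alpha> \<rho> L x \<le> J_fun a b \<alpha> \<rho> L y"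
    using min unfolding local_minimizer_def by blast
  obtain B where "B \<ge> 0" and B: "\<And>\<tau>. \<tau> \<in> {a..b} \<Longrightarrow> \<bar>h \<tau>\<bar> \<le> B"
    using continuous_on_abs_bound[OF DERIV_continuous_on[OF h']] by blast
  obtain B' where "B' \<ge> 0" and B': "\<And>\<tau>. \<tau> \<in> {a..b} \<Longrightarrow> \<bar>h' \<tau>\<bar> \<le> B'"
    using continuous_on_abs_bound[OF h'c] by blast
  define W where "W = B + B' * caputo_bound_const + 1"
  have "W > 0" using \<open>B \<ge> 0\<close> \<open>B' \<ge> 0\<close> caputo_bound_const_nonneg by (simp add: W_def add_nonneg_pos)
  show ?thesis
  proof (rule that[of "\<epsilon> / W"])
    show "\<epsilon> / W > 0" using \<open>\<epsilon> > 0\<close> \<open>W > 0\<close> by simp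
    fix \<sigma> assume \<sigma>: "\<bar>\<sigma>\<bar> < \<epsilon> / W"
    have "((\<lambda>t. x t + \<sigma> * h t) has_real_derivative x' \<tau> + \<sigma> * h' \<tau>) (at \<tau> within {a..b})"
      if "\<tau> \<in> {a..b}" for \<tau>
      using x'[OF that] h'[OF that] by (auto intro!: derivative_eq_intros)
    moreover have "continuous_on {a..b} (\<lambda>\<tau>. x' \<tau> + \<sigma> * h' \<tau>)"
      by (intro continuous_intros x'c h'c)
    ultimately have "(\<lambda>t. x t + \<sigma> * h t) \<in> U_set a b xa xb"
      using min \<open>h a = 0\<close> \<open>h b = 0\<close> unfolding U_set_def C1_on_def local_minimizer_def by auto
    moreover have "frac_norm a b \<alpha> \<rho> (\<lambda>t. \<sigma> * h t) \<le> \<bar>\<sigma>\<bar> * (W - 1)"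
      using frac_norm_scaled_le[OF h'c h' B B'] by (simp add: W_def)
    moreover have "\<bar>\<sigma>\<bar> * (W - 1) < \<epsilon>"
      using \<sigma> \<open>W > 0\<close> mult_right_mono[of "\<bar>\<sigma>\<bar>" "\<epsilon> / W" "W - 1"]
      by (simp add: field_simps)
    ultimately show "J_fun a b \<alpha> \<rho> L x \<le> J_fun a b \<alpha> \<rho> L (\<lambda>t. x t + \<sigma> * h t)"
      by (intro local_min) auto
  qed
qed

lemma hessian_form_uniformly_close:
  assumes "\<epsilon> > 0" "W > 0"
  obtains d where "d > 0" "\<And>t u v u' v' p q. t \<in> {a..b} \<Longrightarrow>
      \<bar>u\<bar> \<le> R \<Longrightarrow> \<bar>v\<bar> \<le> R \<Longrightarrow> \<bar>u'\<bar> \<le> R \<Longrightarrow> \<bar>v'\<bar> \<le> R \<Longrightarrow> \<bar>u' - u\<bar> < d \<Longrightarrow> \<bar>v' - v\<bar> < d \<Longrightarrow>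
      \<bar>p\<bar> \<le> W \<Longrightarrow> \<bar>q\<bar> \<le> W \<Longrightarrow> hessian_form t u' v' p q \<le> hessian_form t u v p q + \<epsilon>"
proof -
  define \<epsilon>' where "\<epsilon>' = \<epsilon> / (4 * W\<^sup>2)"
  have "\<epsilon>' > 0" using assms by (simp add: \<epsilon>'_def)
  obtain d22 where "d22 > 0" and d22: "\<And>t u v u' v'. t \<in> {a..b} \<Longrightarrow> \<bar>u\<bar> \<le> R \<Longrightarrow> \<bar>v\<bar> \<le> R \<Longrightarrow>
      \<bar>u'\<bar> \<le> R \<Longrightarrow> \<bar>v'\<bar> \<le> R \<Longrightarrow> \<bar>u' - u\<bar> < d22 \<Longrightarrow> \<bar>v' - v\<bar> < d22 \<Longrightarrow> \<bar>L22 t u' v' - L22 t u v\<bar> < \<epsilon>'"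
    using uniformly_continuous_on_slab[OF L22_cont \<open>\<epsilon>' > 0\<close>] by blast
  obtain d23 where "d23 > 0" and d23: "\<And>t u v u' v'. t \<in> {a..b} \<Longrightarrow> \<bar>u\<bar> \<le> R \<Longrightarrow> \<bar>v\<bar> \<le> R \<Longrightarrow>
      \<bar>u'\<bar> \<le> R \<Longrightarrow> \<bar>v'\<bar> \<le> R \<Longrightarrow> \<bar>u' - u\<bar> < d23 \<Longrightarrow> \<bar>v' - v\<bar> < d23 \<Longrightarrow> \<bar>L23 t u' v' - L23 t u v\<bar> < \<epsilon>'"
    using uniformly_continuous_on_slab[OF L23_cont \<open>\<epsilon>' > 0\<close>] by blast
  obtain d32 where "d32 > 0" and d32: "\<And>t u v u' v'. t \<in> {a..b} \<Longrightarrow> \<bar>u\<bar> \<le> R \<Longrightarrow> \<bar>v\<bar> \<le> R \<Longrightarrow>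
      \<bar>u'\<bar> \<le> R \<Longrightarrow> \<bar>v'\<bar> \<le> R \<Longrightarrow> \<bar>u' - u\<bar> < d32 \<Longrightarrow> \<bar>v' - v\<bar> < d32 \<Longrightarrow> \<bar>L32 t u' v' - L32 t u v\<bar> < \<epsilon>'"
    using uniformly_continuous_on_slab[OF L32_cont \<open>\<epsilon>' > 0\<close>] by blast
  obtain d33 where "d33 > 0" and d33: "\<And>t u v u' v'. t \<in> {a..b} \<Longrightarrow> \<bar>u\<bar> \<le> R \<Longrightarrow> \<bar>v\<bar> \<le> R \<Longrightarrow>
      \<bar>u'\<bar> \<le> R \<Longrightarrow> \<bar>v'\<bar> \<le> R \<Longrightarrow> \<bar>u' - u\<bar> < d33 \<Longrightarrow> \<bar>v' - v\<bar> < d33 \<Longrightarrow> \<bar>L33 t u' v' - L33 t u v\<bar> < \<epsilon>'"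
    using uniformly_continuous_on_slab[OF L33_cont \<open>\<epsilon>' > 0\<close>] by blast
  show ?thesis
  proof (rule that[of "min (min d22 d23) (min d32 d33)"])
    show "min (min d22 d23) (min d32 d33) > 0"
      using \<open>d22 > 0\<close> \<open>d23 > 0\<close> \<open>d32 > 0\<close> \<open>d33 > 0\<close> by simp
    fix t u v u' v' p q
    assume uv: "t \<in> {a..b}" "\<bar>u\<bar> \<le> R" "\<bar>v\<bar> \<le> R" "\<bar>u'\<bar> \<le> R" "\<bar>v'\<bar> \<le> R"
      "\<bar>u' - u\<bar> < min (min d22 d23) (min d32 d33)" "\<bar>v' - v\<bar> < min (min d22 d23) (min d32 d33)"
      and pq: "\<bar>p\<bar> \<le> W" "\<bar>q\<bar> \<le> W"
    have "hessian_form t u' v' p q - hessian_form t u v p q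
        = ((L22 t u' v' - L22 t u v) * p + (L23 t u' v' - L23 t u v) * q) * p
          + ((L32 t u' v' - L32 t u v) * p + (L33 t u' v' - L33 t u v) * q) * q"
      by (simp add: hessian_form_def algebra_simps)
    also have "\<dots> \<le> 4 * \<epsilon>' * W\<^sup>2"
    proof (rule order_trans[OF abs_ge_self quadratic_form_abs_le[OF _ _ _ _ pq]])
      show "\<bar>L22 t u' v' - L22 t u v\<bar> \<le> \<epsilon>'" using d22[OF uv(1-5)] uv(6,7) by force
      show "\<bar>L23 t u' v' - L23 t u v\<bar> \<le> \<epsilon>'" using d23[OF uv(1-5)] uv(6,7) by force
      show "\<bar>L32 t u' v' - L32 t u v\<bar> \<le> \<epsilon>'" using d32[OF uv(1-5)] uv(6,7) by force
      show "\<bar>L33 t u' v' - L33 t u v\<bar> \<le> \<epsilon>'" using d33[OF uv(1-5)] uv(6,7) by force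
    qed
    also have "\<dots> = \<epsilon>" using assms by (simp add: \<epsilon>'_def)
    finally show "hessian_form t u' v' p q \<le> hessian_form t u v p q + \<epsilon>" by simp
  qed
qed

lemma second_difference_le:
  assumes "\<epsilon> > 0" "W > 0"
  obtains s1 where "s1 > 0" "\<And>s t p q. 0 < s \<Longrightarrow> s < s1 \<Longrightarrow> t \<in> {a..b} \<Longrightarrow> \<bar>p\<bar> \<le> W \<Longrightarrow> \<bar>q\<bar> \<le> W \<Longrightarrow>
      L t (x t + s * p) (CD x t + s * q) + L t (x t - s * p) (CD x t - s * q) - 2 * L t (x t) (CD x t)
        \<le> s\<^sup>2 * (hessian_form t (x t) (CD x t) p q + \<epsilon>)"
proof -
  obtain Bx where "Bx \<ge> 0" "\<And>t. t \<in> {a..b} \<Longrightarrow> \<bar>x t\<bar> \<le> Bx"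
    using continuous_on_abs_bound[OF continuous_on_minimizer] by blast
  moreover obtain BD where "BD \<ge> 0" "\<And>t. t \<in> {a..b} \<Longrightarrow> \<bar>CD x t\<bar> \<le> BD"
    using continuous_on_abs_bound[OF continuous_on_CD_minimizer] by blast
  ultimately have bounded: "\<bar>x t + r\<bar> \<le> Bx + BD + W" "\<bar>CD x t + r\<bar> \<le> Bx + BD + W"
    if "t \<in> {a..b}" "\<bar>r\<bar> \<le> W" for t r
    using that abs_triangle_ineq[of "x t" r] abs_triangle_ineq[of "CD x t" r] by fastforce+
  obtain d where "d > 0" and close: "\<And>t u v u' v' p q. t \<in> {a..b} \<Longrightarrow>
      \<bar>u\<bar> \<le> Bx + BD + W \<Longrightarrow> \<bar>v\<bar> \<le> Bx + BD + W \<Longrightarrow> \<bar>u'\<bar> \<le> Bx + BD + W \<Longrightarrow> \<bar>v'\<bar> \<le> Bx + BD + W \<Longrightarrow>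
      \<bar>u' - u\<bar> < d \<Longrightarrow> \<bar>v' - v\<bar> < d \<Longrightarrow> \<bar>p\<bar> \<le> W \<Longrightarrow> \<bar>q\<bar> \<le> W \<Longrightarrow>
      hessian_form t u' v' p q \<le> hessian_form t u v p q + \<epsilon>"
    using hessian_form_uniformly_close[OF assms] by blast
  show ?thesis
  proof (rule that[of "min 1 (d / W)"])
    show "min 1 (d / W) > 0" using \<open>d > 0\<close> \<open>W > 0\<close> by simp
    fix s t p q assume s: "0 < s" "s < min 1 (d / W)" and t: "t \<in> {a..b}"
      and pq: "\<bar>p\<bar> \<le> W" "\<bar>q\<bar> \<le> W"
    have "s * W < d" using s \<open>W > 0\<close> by (simp add: field_simps)
    have small: "\<bar>r * p\<bar> \<le> W" "\<bar>r * q\<bar> \<le> W" "\<bar>r * p\<bar> < d" "\<bar>r * q\<bar> < d" if "\<bar>r\<bar> \<le> s" for r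
    proof -
      have "\<bar>r * p\<bar> \<le> s * W" "\<bar>r * q\<bar> \<le> s * W"
        unfolding abs_mult using that pq s by (intro mult_mono; simp)+
      then show "\<bar>r * p\<bar> \<le> W" "\<bar>r * q\<bar> \<le> W" "\<bar>r * p\<bar> < d" "\<bar>r * q\<bar> < d"
        using \<open>s * W < d\<close> s \<open>W > 0\<close> mult_right_mono[of s 1 W] by linarith+
    qed
    have "L t (x t + s * p) (CD x t + s * q) + L t (x t - s * p) (CD x t - s * q) - 2 * L t (x t) (CD x t)
        \<le> s\<^sup>2 * (hessian_form t (x t) (CD x t) p q + \<epsilon>)"
    proof (rule symmetric_second_difference_le[OF L2[OF t] L3[OF t] L22[OF t] L23[OF t] L32[OF t] L33[OF t]
          continuous_on_slice[OF L2_cont t] continuous_on_slice[OF L22_cont t]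
          continuous_on_slice[OF L32_cont t] s(1)])
      fix r :: real assume "r \<in> {-s..s}"
      then have r: "\<bar>r\<bar> \<le> s" by auto
      have "\<bar>x t + 0\<bar> \<le> Bx + BD + W" "\<bar>CD x t + 0\<bar> \<le> Bx + BD + W"
        using bounded[OF t, of 0] \<open>W > 0\<close> by auto
      moreover have "\<bar>x t + r * p\<bar> \<le> Bx + BD + W" "\<bar>CD x t + r * q\<bar> \<le> Bx + BD + W"
        using bounded(1)[OF t small(1)[OF r]] bounded(2)[OF t small(2)[OF r]] .
      ultimately have "hessian_form t (x t + r * p) (CD x t + r * q) p q \<le> hessian_form t (x t) (CD x t) p q + \<epsilon>"
        using close[OF t, of "x t" "CD x t" "x t + r * p" "CD x t + r * q" p q] small(3,4)[OF r] pq
        by simp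
      then show "(L22 t (x t + r * p) (CD x t + r * q) * p + L23 t (x t + r * p) (CD x t + r * q) * q) * p
          + (L32 t (x t + r * p) (CD x t + r * q) * p + L33 t (x t + r * p) (CD x t + r * q) * q) * q
          \<le> hessian_form t (x t) (CD x t) p q + \<epsilon>"
        by (simp add: hessian_form_def)
    qed
    then show "L t (x t + s * p) (CD x t + s * q) + L t (x t - s * p) (CD x t - s * q) - 2 * L t (x t) (CD x t)
        \<le> s\<^sup>2 * (hessian_form t (x t) (CD x t) p q + \<epsilon>)" .
  qed
qed

lemma has_integral_J_fun_variation:
  assumes "continuous_on {a..b} h'"
    and h': "\<And>\<tau>. \<tau> \<in> {a..b} \<Longrightarrow> (h has_real_derivative h' \<tau>) (at \<tau> within {a..b})"
  shows "((\<lambda>t. L t (x t + \<sigma> * h t) (CD x t + \<sigma> * CD h t))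
           has_integral J_fun a b \<alpha> \<rho> L (\<lambda>t. x t + \<sigma> * h t)) {a..b}"
proof -
  obtain x' where x': "continuous_on {a..b} x'"
    "\<And>\<tau>. \<tau> \<in> {a..b} \<Longrightarrow> (x has_real_derivative x' \<tau>) (at \<tau> within {a..b})"
    using minimizer_C1 by blast
  have "continuous_on {a..b} (\<lambda>t. L t (x t + \<sigma> * h t) (CD x t + \<sigma> * CD h t))"
    by (intro continuous_on_compose3[OF L_cont] continuous_on_add continuous_on_mult continuous_on_const
        continuous_on_minimizer continuous_on_CD_minimizer DERIV_continuous_on[OF h']
        caputo_left_continuous[OF assms])
  then have "((\<lambda>t. L t (x t + \<sigma> * h t) (CD x t + \<sigma> * CD h t)) has_integral
      integral {a..b} (\<lambda>t. L t (x t + \<sigma> * h t) (CD x t + \<sigma> * CD h t))) {a..b}"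
    by (intro integrable_integral integrable_continuous_interval)
  then show ?thesis using J_fun_add_scaled[OF x' assms, of L \<sigma>] by simp
qed

lemma has_integral_second_variation:
  assumes "continuous_on {a..b} h'"
    and h': "\<And>\<tau>. \<tau> \<in> {a..b} \<Longrightarrow> (h has_real_derivative h' \<tau>) (at \<tau> within {a..b})"
  shows "((\<lambda>t. hessian_form t (x t) (CD x t) (h t) (CD h t)) has_integral second_variation h) {a..b}"
proof -
  have "continuous_on {a..b} (\<lambda>t. hessian_form t (x t) (CD x t) (h t) (CD h t))"
    unfolding hessian_form_def
    by (intro continuous_on_add continuous_on_mult DERIV_continuous_on[OF h'] caputo_left_continuous[OF assms]
        continuous_on_along_minimizer[OF L22_cont] continuous_on_along_minimizer[OF L23_cont]
        continuous_on_along_minimizer[OF L32_cont] continuous_on_along_minimizer[OF L33_cont])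
  then show ?thesis
    unfolding second_variation_def by (intro integrable_integral integrable_continuous_interval)
qed

lemma J_fun_second_difference_le:
  assumes h'c: "continuous_on {a..b} h'"
    and h': "\<And>\<tau>. \<tau> \<in> {a..b} \<Longrightarrow> (h has_real_derivative h' \<tau>) (at \<tau> within {a..b})"
    and "\<epsilon> > 0"
  obtains s1 where "s1 > 0" "\<And>s. 0 < s \<Longrightarrow> s < s1 \<Longrightarrow>
      J_fun a b \<alpha> \<rho> L (\<lambda>t. x t + s * h t) + J_fun a b \<alpha> \<rho> L (\<lambda>t. x t + (-s) * h t) - 2 * J_fun a b \<alpha> \<rho> L x
        \<le> s\<^sup>2 * (second_variation h + \<epsilon> * (b - a))"
proof -
  obtain B where "B \<ge> 0" and B: "\<And>t. t \<in> {a..b} \<Longrightarrow> \<bar>h t\<bar> \<le> B"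
    using continuous_on_abs_bound[OF DERIV_continuous_on[OF h']] by blast
  obtain B' where "B' \<ge> 0" and B': "\<And>t. t \<in> {a..b} \<Longrightarrow> \<bar>CD h t\<bar> \<le> B'"
    using continuous_on_abs_bound[OF caputo_left_continuous[OF h'c h']] by blast
  have W: "\<bar>h t\<bar> \<le> B + B' + 1" "\<bar>CD h t\<bar> \<le> B + B' + 1" if "t \<in> {a..b}" for t
    using B[OF that] B'[OF that] \<open>B \<ge> 0\<close> \<open>B' \<ge> 0\<close> by linarith+
  have "B + B' + 1 > 0" using \<open>B \<ge> 0\<close> \<open>B' \<ge> 0\<close> by linarith
  obtain s1 where "s1 > 0" and taylor: "\<And>s t p q. 0 < s \<Longrightarrow> s < s1 \<Longrightarrow> t \<in> {a..b} \<Longrightarrow>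
      \<bar>p\<bar> \<le> B + B' + 1 \<Longrightarrow> \<bar>q\<bar> \<le> B + B' + 1 \<Longrightarrow>
      L t (x t + s * p) (CD x t + s * q) + L t (x t - s * p) (CD x t - s * q) - 2 * L t (x t) (CD x t)
        \<le> s\<^sup>2 * (hessian_form t (x t) (CD x t) p q + \<epsilon>)"
    using second_difference_le[OF \<open>\<epsilon> > 0\<close> \<open>B + B' + 1 > 0\<close>] by blast
  show ?thesis
  proof (rule that[OF \<open>s1 > 0\<close>])
    fix s assume s: "0 < s" "s < s1"
    note J_int = has_integral_J_fun_variation[OF h'c h']
    have "((\<lambda>t. L t (x t + s * h t) (CD x t + s * CD h t) + L t (x t - s * h t) (CD x t - s * CD h t)
        - 2 * L t (x t) (CD x t)) has_integral
          J_fun a b \<alpha> \<rho> L (\<lambda>t. x t + s * h t) + J_fun a b \<alpha> \<rho> L (\<lambda>t. x t + (-s) * h t)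
          - 2 * J_fun a b \<alpha> \<rho> L x) {a..b}"
      using has_integral_diff[OF has_integral_add[OF J_int[of s] J_int[of "-s"]]
          has_integral_mult_right[OF J_int[of 0], of 2]] by simp
    moreover have "((\<lambda>t. s\<^sup>2 * (hessian_form t (x t) (CD x t) (h t) (CD h t) + \<epsilon>)) has_integral
        s\<^sup>2 * (second_variation h + \<epsilon> * (b - a))) {a..b}"
      using has_integral_second_variation[OF h'c h'] has_integral_const_real[of \<epsilon> a b] params
      by (intro has_integral_mult_right has_integral_add) (simp_all add: mult.commute)
    moreover have "L t (x t + s * h t) (CD x t + s * CD h t) + L t (x t - s * h t) (CD x t - s * CD h t)
        - 2 * L t (x t) (CD x t) \<le> s\<^sup>2 * (hessian_form t (x t) (CD x t) (h t) (CD h t) + \<epsilon>)"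
      if "t \<in> {a..b}" for t
      by (rule taylor[OF s that W[OF that]])
    ultimately show "J_fun a b \<alpha> \<rho> L (\<lambda>t. x t + s * h t) + J_fun a b \<alpha> \<rho> L (\<lambda>t. x t + (-s) * h t)
        - 2 * J_fun a b \<alpha> \<rho> L x \<le> s\<^sup>2 * (second_variation h + \<epsilon> * (b - a))"
      by (rule has_integral_le)
  qed
qed

lemma second_variation_ge:
  assumes h'c: "continuous_on {a..b} h'"
    and h': "\<And>\<tau>. \<tau> \<in> {a..b} \<Longrightarrow> (h has_real_derivative h' \<tau>) (at \<tau> within {a..b})"
    and "h a = 0" "h b = 0" "\<epsilon> > 0"
  shows "- (\<epsilon> * (b - a)) \<le> second_variation h"
proof -
  obtain s0 where "s0 > 0"
    and J_min: "\<And>\<sigma>. \<bar>\<sigma>\<bar> < s0 \<Longrightarrow> J_fun a b \<alpha> \<rho> L x \<le> J_fun a b \<alpha> \<rho> L (\<lambda>t. x t + \<sigma> * h t)"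
    using minimizer_le_variation[OF h'c h' \<open>h a = 0\<close> \<open>h b = 0\<close>] by blast
  obtain s1 where "s1 > 0" and second_difference: "\<And>s. 0 < s \<Longrightarrow> s < s1 \<Longrightarrow>
      J_fun a b \<alpha> \<rho> L (\<lambda>t. x t + s * h t) + J_fun a b \<alpha> \<rho> L (\<lambda>t. x t + (-s) * h t) - 2 * J_fun a b \<alpha> \<rho> L x
        \<le> s\<^sup>2 * (second_variation h + \<epsilon> * (b - a))"
    using J_fun_second_difference_le[OF h'c h' \<open>\<epsilon> > 0\<close>] by blast
  define s where "s = min (s0 / 2) (s1 / 2)"
  have s: "0 < s" "s < s0" "s < s1" using \<open>s0 > 0\<close> \<open>s1 > 0\<close> by (auto simp: s_def)
  have "0 \<le> s\<^sup>2 * (second_variation h + \<epsilon> * (b - a))"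
    using second_difference[OF s(1,3)] J_min[of s] J_min[of "-s"] s by simp
  then show ?thesis using s(1) by (simp add: zero_le_mult_iff)
qed

lemma second_variation_nonneg:
  assumes "continuous_on {a..b} h'"
    and "\<And>\<tau>. \<tau> \<in> {a..b} \<Longrightarrow> (h has_real_derivative h' \<tau>) (at \<tau> within {a..b})"
    and "h a = 0" "h b = 0"
  shows "0 \<le> second_variation h"
proof (rule field_le_epsilon)
  fix \<epsilon> :: real assume "\<epsilon> > 0"
  then have "- (\<epsilon> / (b - a) * (b - a)) \<le> second_variation h"
    using params by (intro second_variation_ge[OF assms]) auto
  then show "0 \<le> second_variation h + \<epsilon>" using params by simp
qed

section \<open>The Legendre condition\<close>

lemma L33_negative_near:
  assumes t0: "t0 \<in> {a..b}" and neg: "L33 t0 (x t0) (CD x t0) < 0"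
  obtains c \<delta> \<kappa> where "a \<le> c" "\<delta> > 0" "c + \<delta> \<le> b" "\<kappa> > 0"
    "\<And>t. t \<in> {c..c+\<delta>} \<Longrightarrow> L33 t (x t) (CD x t) \<le> -\<kappa>"
proof -
  define \<kappa> where "\<kappa> = - L33 t0 (x t0) (CD x t0) / 2"
  have "\<kappa> > 0" using neg by (simp add: \<kappa>_def)
  obtain r where "r > 0" and r: "\<And>t. t \<in> {a..b} \<Longrightarrow> dist t t0 < r
      \<Longrightarrow> dist (L33 t (x t) (CD x t)) (L33 t0 (x t0) (CD x t0)) < \<kappa>"
    using continuous_on_along_minimizer[OF L33_cont] t0 \<open>\<kappa> > 0\<close> unfolding continuous_on_iff by metis
  define m where "m = min (r / 2) ((b - a) / 2)"
  have m: "0 < m" "m < r" using \<open>r > 0\<close> params by (auto simp: m_def)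
  define c where "c = max a (t0 - m)"
  define \<delta> where "\<delta> = min m (b - c)"
  have "a \<le> c" "c \<le> t0" "c < b" using m t0 params by (auto simp: c_def)
  moreover have "\<delta> > 0" "c + \<delta> \<le> b" using \<open>c < b\<close> m by (auto simp: \<delta>_def)
  moreover have "L33 t (x t) (CD x t) \<le> -\<kappa>" if "t \<in> {c..c+\<delta>}" for t
  proof -
    have "t \<in> {a..b}" using that \<open>a \<le> c\<close> \<open>c + \<delta> \<le> b\<close> by auto
    moreover have "dist t t0 < r"
      using that m \<open>c \<le> t0\<close> by (auto simp: c_def \<delta>_def dist_real_def)
    ultimately show ?thesis using r[of t] by (auto simp: dist_real_def \<kappa>_def abs_less_iff)
  qed
  ultimately show ?thesis using that \<open>\<kappa> > 0\<close> by blast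
qed

lemma hessian_coefficients_bounded:
  obtains M where "M \<ge> 0" "\<And>t. t \<in> {a..b} \<Longrightarrow> \<bar>L22 t (x t) (CD x t)\<bar> \<le> M
      \<and> \<bar>L23 t (x t) (CD x t) + L32 t (x t) (CD x t)\<bar> \<le> M \<and> \<bar>L33 t (x t) (CD x t)\<bar> \<le> M"
proof -
  have "continuous_on {a..b} (\<lambda>t. \<bar>L22 t (x t) (CD x t)\<bar>
      + \<bar>L23 t (x t) (CD x t) + L32 t (x t) (CD x t)\<bar> + \<bar>L33 t (x t) (CD x t)\<bar>)"
    by (intro continuous_on_add continuous_on_rabs
        continuous_on_along_minimizer[OF L22_cont] continuous_on_along_minimizer[OF L23_cont]
        continuous_on_along_minimizer[OF L32_cont] continuous_on_along_minimizer[OF L33_cont])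
  from continuous_on_abs_bound[OF this] obtain M where "M \<ge> 0"
    "\<And>t. t \<in> {a..b} \<Longrightarrow> \<bar>\<bar>L22 t (x t) (CD x t)\<bar>
      + \<bar>L23 t (x t) (CD x t) + L32 t (x t) (CD x t)\<bar> + \<bar>L33 t (x t) (CD x t)\<bar>\<bar> \<le> M"
    by blast
  then show ?thesis using that by fastforce
qed

lemma hessian_form_eq:
  "hessian_form t u v p q = L22 t u v * p\<^sup>2 + (L23 t u v + L32 t u v) * p * q + L33 t u v * q\<^sup>2"
  by (simp add: hessian_form_def power2_eq_square algebra_simps)

context
  fixes c \<delta> \<kappa> M e :: real
  assumes c: "a \<le> c" "c + \<delta> \<le> b" and e: "0 < e" "e \<le> \<delta> / 2" and "\<kappa> \<ge> 0"
    and neg: "\<And>t. t \<in> {c..c+\<delta>} \<Longrightarrow> L33 t (x t) (CD x t) \<le> -\<kappa>"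
    and M: "\<And>t. t \<in> {a..b} \<Longrightarrow> \<bar>L22 t (x t) (CD x t)\<bar> \<le> M
      \<and> \<bar>L23 t (x t) (CD x t) + L32 t (x t) (CD x t)\<bar> \<le> M \<and> \<bar>L33 t (x t) (CD x t)\<bar> \<le> M"
begin

lemma hessian_form_bump_le_on_support:
  assumes t: "c \<le> t" "t \<le> c + e"
  shows "hessian_form t (x t) (CD x t) (bump c e t) (CD (bump c e) t)
      \<le> M * (e^4 / 16)\<^sup>2 + M * (e^4 / 16) * near_bound e - indicator {c+e/4..c+e/2} t * (\<kappa> * (low_bound e)\<^sup>2)"
proof -
  define P R S where "P = L22 t (x t) (CD x t)"
    and "R = L23 t (x t) (CD x t) + L32 t (x t) (CD x t)" and "S = L33 t (x t) (CD x t)"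
  define p q where "p = bump c e t" and "q = CD (bump c e) t"
  have PRS: "\<bar>P\<bar> \<le> M" "\<bar>R\<bar> \<le> M" using M[of t] t c e by (auto simp: P_def R_def)
  have p: "0 \<le> p" "p \<le> e^4 / 16" using bump_bounds[OF e(1)] by (auto simp: p_def)
  have q: "\<bar>q\<bar> \<le> near_bound e"
    unfolding q_def using t c e by (intro caputo_bump_abs_le_on_support) auto
  have "P * p\<^sup>2 \<le> \<bar>P\<bar> * p\<^sup>2" by (simp add: mult_right_mono)
  also have "\<dots> \<le> M * (e^4 / 16)\<^sup>2" using PRS p by (intro mult_mono power_mono) auto
  finally have P_term: "P * p\<^sup>2 \<le> M * (e^4 / 16)\<^sup>2" .
  have "R * p * q \<le> \<bar>R\<bar> * \<bar>p\<bar> * \<bar>q\<bar>" by (simp add: abs_mult[symmetric])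
  also have "\<dots> \<le> M * (e^4 / 16) * near_bound e" using PRS p q by (intro mult_mono) auto
  finally have R_term: "R * p * q \<le> M * (e^4 / 16) * near_bound e" .
  have "S \<le> -\<kappa>" using neg[of t] t e by (simp add: S_def)
  have S_term: "S * q\<^sup>2 \<le> - indicator {c+e/4..c+e/2} t * (\<kappa> * (low_bound e)\<^sup>2)"
  proof (cases "t \<in> {c+e/4..c+e/2}")
    case True
    have "0 \<le> low_bound e" using e caputo_const_pos params by (simp add: low_bound_def)
    moreover have "low_bound e \<le> q" unfolding q_def using True c t e by (intro caputo_bump_ge) auto
    ultimately have "(low_bound e)\<^sup>2 \<le> q\<^sup>2" by (intro power_mono)
    have "S * q\<^sup>2 \<le> -\<kappa> * q\<^sup>2" using \<open>S \<le> -\<kappa>\<close> by (intro mult_right_mono) auto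
    also have "\<dots> \<le> -\<kappa> * (low_bound e)\<^sup>2"
      using \<open>(low_bound e)\<^sup>2 \<le> q\<^sup>2\<close> \<open>\<kappa> \<ge> 0\<close> by (simp add: mult_left_mono)
    finally show ?thesis using True by simp
  next
    case False
    then show ?thesis using \<open>S \<le> -\<kappa>\<close> \<open>\<kappa> \<ge> 0\<close> by (simp add: mult_nonpos_nonneg)
  qed
  have "hessian_form t (x t) (CD x t) p q = P * p\<^sup>2 + R * p * q + S * q\<^sup>2"
    by (simp add: hessian_form_eq P_def R_def S_def)
  with P_term R_term S_term show ?thesis by (simp add: p_def q_def)
qed

lemma hessian_form_bump_le_off_support:
  assumes t: "t \<in> {a..b}" "t \<notin> {c..c+e}"
  shows "hessian_form t (x t) (CD x t) (bump c e t) (CD (bump c e) t)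
           \<le> indicator {c+\<delta>..b} t * (M * (far_bound (\<delta> / 2) e)\<^sup>2)"
proof -
  define S q where "S = L33 t (x t) (CD x t)" and "q = CD (bump c e) t"
  have "M \<ge> 0" using M[OF t(1)] by auto
  have "bump c e t = 0" using t e by (intro bump_outside) auto
  then have "hessian_form t (x t) (CD x t) (bump c e t) q = S * q\<^sup>2"
    by (simp add: hessian_form_eq S_def)
  moreover consider (before) "t < c" | (between) "c + e < t" "t \<le> c + \<delta>" | (after) "c + \<delta> < t"
    using t by fastforce
  then have "S * q\<^sup>2 \<le> indicator {c+\<delta>..b} t * (M * (far_bound (\<delta> / 2) e)\<^sup>2)"
  proof cases
    case before
    then have "q = 0" using t e by (simp add: q_def caputo_bump_before)
    then show ?thesis using \<open>M \<ge> 0\<close> by simp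
  next
    case between
    then have "S \<le> 0" using neg[of t] e \<open>\<kappa> \<ge> 0\<close> by (simp add: S_def)
    then have "S * q\<^sup>2 \<le> 0" by (simp add: mult_nonpos_nonneg)
    moreover have "0 \<le> indicator {c+\<delta>..b} t * (M * (far_bound (\<delta> / 2) e)\<^sup>2)"
      using \<open>M \<ge> 0\<close> by simp
    ultimately show ?thesis by linarith
  next
    case after
    have "\<bar>q\<bar> \<le> far_bound (\<delta> / 2) e"
      unfolding q_def using after c e t by (intro caputo_bump_abs_le_after) auto
    then have "\<bar>q\<bar>\<^sup>2 \<le> (far_bound (\<delta> / 2) e)\<^sup>2" by (intro power_mono) auto
    have "S * q\<^sup>2 \<le> \<bar>S\<bar> * \<bar>q\<bar>\<^sup>2" by (simp add: mult_right_mono)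
    also have "\<dots> \<le> M * (far_bound (\<delta> / 2) e)\<^sup>2"
      using M[OF t(1)] \<open>\<bar>q\<bar>\<^sup>2 \<le> (far_bound (\<delta> / 2) e)\<^sup>2\<close> by (intro mult_mono) (auto simp: S_def)
    finally show ?thesis using after t by simp
  qed
  ultimately show ?thesis by (simp add: q_def)
qed

lemma second_variation_bump_le:
  "second_variation (bump c e)
      \<le> e * (M * (e^4 / 16)\<^sup>2 + M * (e^4 / 16) * near_bound e) - e / 4 * (\<kappa> * (low_bound e)\<^sup>2)
        + (b - a) * (M * (far_bound (\<delta> / 2) e)\<^sup>2)"
proof -
  let ?E = "M * (e^4 / 16)\<^sup>2 + M * (e^4 / 16) * near_bound e"
  have "hessian_form t (x t) (CD x t) (bump c e t) (CD (bump c e) t)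
      \<le> indicator {c..c+e} t * ?E - indicator {c+e/4..c+e/2} t * (\<kappa> * (low_bound e)\<^sup>2)
        + indicator {c+\<delta>..b} t * (M * (far_bound (\<delta> / 2) e)\<^sup>2)" if "t \<in> {a..b}" for t
  proof (cases "t \<in> {c..c+e}")
    case True
    moreover have "t \<notin> {c+\<delta>..b}" using True e by auto
    ultimately show ?thesis using hessian_form_bump_le_on_support[of t] by simp
  next
    case False
    moreover have "t \<notin> {c+e/4..c+e/2}" using False e by auto
    ultimately show ?thesis using hessian_form_bump_le_off_support[OF that] by simp
  qed
  moreover have "((\<lambda>t. indicator {c..c+e} t * ?E - indicator {c+e/4..c+e/2} t * (\<kappa> * (low_bound e)\<^sup>2)
        + indicator {c+\<delta>..b} t * (M * (far_bound (\<delta> / 2) e)\<^sup>2)) has_integral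
      ?E * (c + e - c) - \<kappa> * (low_bound e)\<^sup>2 * (c + e / 2 - (c + e / 4))
        + M * (far_bound (\<delta> / 2) e)\<^sup>2 * (b - (c + \<delta>))) {a..b}"
    using c e by (intro has_integral_add has_integral_diff has_integral_indicator_const) auto
  ultimately have "second_variation (bump c e)
      \<le> ?E * (c + e - c) - \<kappa> * (low_bound e)\<^sup>2 * (c + e / 2 - (c + e / 4))
        + M * (far_bound (\<delta> / 2) e)\<^sup>2 * (b - (c + \<delta>))"
    by (intro has_integral_le[OF has_integral_second_variation[OF continuous_on_bump' bump_has_real_derivative_within]])
  also have "M * (far_bound (\<delta> / 2) e)\<^sup>2 * (b - (c + \<delta>)) \<le> M * (far_bound (\<delta> / 2) e)\<^sup>2 * (b - a)"
    using c e M[of a] params by (intro mult_left_mono) auto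
  finally show ?thesis by (simp add: algebra_simps)
qed

end

theorem legendre_condition: "\<forall>t\<in>{a..b}. L33 t (x t) (CD x t) \<ge> 0"
proof (rule ccontr)
  assume "\<not> (\<forall>t\<in>{a..b}. L33 t (x t) (CD x t) \<ge> 0)"
  then obtain t0 where "t0 \<in> {a..b}" "L33 t0 (x t0) (CD x t0) < 0" by auto
  then obtain c \<delta> \<kappa> where "a \<le> c" "\<delta> > 0" "c + \<delta> \<le> b" "\<kappa> > 0"
    and neg: "\<And>t. t \<in> {c..c+\<delta>} \<Longrightarrow> L33 t (x t) (CD x t) \<le> -\<kappa>"
    using L33_negative_near by blast
  note c = \<open>a \<le> c\<close> \<open>c + \<delta> \<le> b\<close>
  obtain M where "M \<ge> 0" and M: "\<And>t. t \<in> {a..b} \<Longrightarrow> \<bar>L22 t (x t) (CD x t)\<bar> \<le> M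
      \<and> \<bar>L23 t (x t) (CD x t) + L32 t (x t) (CD x t)\<bar> \<le> M \<and> \<bar>L33 t (x t) (CD x t)\<bar> \<le> M"
    using hessian_coefficients_bounded by blast
  have "b - a \<ge> 0" "\<delta> / 2 > 0" using params \<open>\<delta> > 0\<close> by auto
  then obtain e0 where "e0 > 0" and dominates: "\<And>e. 0 < e \<Longrightarrow> e < e0 \<Longrightarrow>
      e * (M * (e^4 / 16)\<^sup>2 + M * (e^4 / 16) * near_bound e) + (b - a) * (M * (far_bound (\<delta> / 2) e)\<^sup>2)
      < e / 4 * (\<kappa> * (low_bound e)\<^sup>2)"
    using bump_gain_dominates[OF \<open>M \<ge> 0\<close> _ \<open>\<kappa> > 0\<close>] by blast
  define e where "e = min (e0 / 2) (\<delta> / 2)"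
  have e: "0 < e" "e < e0" "e \<le> \<delta> / 2" using \<open>e0 > 0\<close> \<open>\<delta> > 0\<close> by (auto simp: e_def)
  have "0 \<le> second_variation (bump c e)"
    using c e \<open>\<delta> > 0\<close> bump_outside(1)[of a c e] bump_outside(1)[of b c e]
    by (intro second_variation_nonneg[OF continuous_on_bump' bump_has_real_derivative_within]) auto
  also have "\<dots> < 0"
    using second_variation_bump_le[OF c e(1,3) _ neg M] dominates[OF e(1,2)] \<open>\<kappa> > 0\<close>
    by linarith
  finally show False by simp
qed

end

theorem mainTheorem7:
  fixes a b \<alpha> \<rho> xa xb :: real
    and L L2 L3 L22 L23 L32 L33 :: "real \<Rightarrow> real \<Rightarrow> real \<Rightarrow> real"
    and x :: "real \<Rightarrow> real"
  assumes "0 < a" "a < b" "0 < \<alpha>" "\<alpha> < 1" "0 < \<rho>"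
    and L_cont: "continuous_on ({a..b} \<times> UNIV \<times> UNIV) (\<lambda>(t, u, v). L t u v)"
    and L2: "\<And>t u v. t \<in> {a..b} \<Longrightarrow> ((\<lambda>u. L t u v) has_real_derivative L2 t u v) (at u)"
    and L3: "\<And>t u v. t \<in> {a..b} \<Longrightarrow> ((\<lambda>v. L t u v) has_real_derivative L3 t u v) (at v)"
    and L2_cont: "continuous_on ({a..b} \<times> UNIV \<times> UNIV) (\<lambda>(t, u, v). L2 t u v)"
    and L3_cont: "continuous_on ({a..b} \<times> UNIV \<times> UNIV) (\<lambda>(t, u, v). L3 t u v)"
    and D_right: "\<And>y. C1_on a b y \<Longrightarrow>
        RL_right_continuous a b \<alpha> \<rho> (\<lambda>t. L3 t (y t) (caputo_left a b \<alpha> \<rho> y t))"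
    and min: "local_minimizer a b \<alpha> \<rho> L (U_set a b xa xb) x"
    and L22: "\<And>t u v. t \<in> {a..b} \<Longrightarrow> ((\<lambda>u. L2 t u v) has_real_derivative L22 t u v) (at u)"
    and L23: "\<And>t u v. t \<in> {a..b} \<Longrightarrow> ((\<lambda>v. L2 t u v) has_real_derivative L23 t u v) (at v)"
    and L32: "\<And>t u v. t \<in> {a..b} \<Longrightarrow> ((\<lambda>u. L3 t u v) has_real_derivative L32 t u v) (at u)"
    and L33: "\<And>t u v. t \<in> {a..b} \<Longrightarrow> ((\<lambda>v. L3 t u v) has_real_derivative L33 t u v) (at v)"
    and L22_cont: "continuous_on ({a..b} \<times> UNIV \<times> UNIV) (\<lambda>(t, u, v). L22 t u v)"
    and L23_cont: "continuous_on ({a..b} \<times> UNIV \<times> UNIV) (\<lambda>(t, u, v). L23 t u v)"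
    and L32_cont: "continuous_on ({a..b} \<times> UNIV \<times> UNIV) (\<lambda>(t, u, v). L32 t u v)"
    and L33_cont: "continuous_on ({a..b} \<times> UNIV \<times> UNIV) (\<lambda>(t, u, v). L33 t u v)"
  shows "\<forall>t\<in>{a..b}. L33 t (x t) (caputo_left a b \<alpha> \<rho> x t) \<ge> 0"
proof -
  \<comment> \<open>\<open>D_right\<close> and \<open>L3_cont\<close> are needed only for the Euler--Lagrange equation, not here.\<close>
  interpret legendre_setting a b \<alpha> \<rho> L L2 L3 L22 L23 L32 L33 x xa xb
    by unfold_locales (use assms in auto)
  show ?thesis by (rule legendre_condition)
qed

end
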